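(* Let $q_c\in(0,1)$. There exist constants $C^\pm>0$, depending only on $q_c$, with the following property. Let $q\in H^1(\mathbb{R})$ and $p\in H^2(\mathbb{R})$ satisfy $p_y=q$ and $\|q\|_{L^\infty}\le q_c$. Define the increasing bijection $x:\mathbb{R}\to\mathbb{R}$ by $\frac{dx}{dy}=\sqrt{1-q(y)^2}$; equivalently $\frac{dx}{dy}=\cos w$ with $q=\sin w$ and $|w|<\pi/2$, with an arbitrary additive constant. Let $y=y(x)$ be its inverse, and define $u(x):=p(y(x))$. Then \[ C^-\|p\|_{H^2}\le \|u\|_{H^2}\le C^+\|p\|_{H^2}. \]
   Context: In terms of $w$ with $q=\sin w$, this transformation reads $u=w_t=p$, $u_x=\tan w=\frac{p_y}{\sqrt{1-q^2}}$ and $u_{xx}=\frac{p_{yy}}{(1-q^2)^2}$. This is the correspondence between the short-pulse equation $u_{xt}=u+\tfrac16(u^3)_{xx}$ and the sine–Gordon equation $w_{yt}=\sin w$, given by $\partial_y x=\cos w$ and $\partial_t x=-\tfrac12 w_t^2$. *)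

theory Defs
  imports "HOL-Analysis.Analysis"
begin

definition test_fun :: "(real \<Rightarrow> real) \<Rightarrow> bool" where
  "test_fun \<phi> \<longleftrightarrow> (\<forall>k t. ((deriv ^^ k) \<phi>) differentiable (at t))
                   \<and> (\<exists>R. \<forall>t. R < \<bar>t\<bar> \<longrightarrow> \<phi> t = 0)"

definition weak_deriv :: "(real \<Rightarrow> real) \<Rightarrow> (real \<Rightarrow> real) \<Rightarrow> bool" where
  "weak_deriv f g \<longleftrightarrow> (\<forall>\<phi>. test_fun \<phi> \<longrightarrow>
      integrable lborel (\<lambda>t. f t * deriv \<phi> t) \<and> integrable lborel (\<lambda>t. g t * \<phi> t) \<and>
      (\<integral>t. f t * deriv \<phi> t \<partial>lborel) = - (\<integral>t. g t * \<phi> t \<partial>lborel))"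

definition L2 :: "(real \<Rightarrow> real) \<Rightarrow> bool" where
  "L2 f \<longleftrightarrow> f \<in> borel_measurable lborel \<and> integrable lborel (\<lambda>t. (f t)\<^sup>2)"

definition H1 :: "(real \<Rightarrow> real) \<Rightarrow> bool" where
  "H1 f \<longleftrightarrow> L2 f \<and> (\<exists>g. L2 g \<and> weak_deriv f g)"

definition H2_witness :: "(real \<Rightarrow> real) \<Rightarrow> (real \<Rightarrow> real) \<Rightarrow> (real \<Rightarrow> real) \<Rightarrow> bool" where
  "H2_witness f g h \<longleftrightarrow> L2 f \<and> L2 g \<and> L2 h \<and> weak_deriv f g \<and> weak_deriv g h"

definition H2 :: "(real \<Rightarrow> real) \<Rightarrow> bool" where
  "H2 f \<longleftrightarrow> (\<exists>g h. H2_witness f g h)"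

text \<open>H^2 norm: sqrt of sum of squared L^2 norms of f, f', f'' (weak derivatives,
  unique a.e., so the choice does not matter).\<close>
definition H2_norm :: "(real \<Rightarrow> real) \<Rightarrow> real" where
  "H2_norm f = (let (g, h) = (SOME (g, h). H2_witness f g h) in
     sqrt ((\<integral>t. (f t)\<^sup>2 \<partial>lborel) + (\<integral>t. (g t)\<^sup>2 \<partial>lborel) + (\<integral>t. (h t)\<^sup>2 \<partial>lborel)))"

end

theory Submission
  imports Defs
begin

text \<open>
  The slope of \<open>x\<close>
  lies in \<open>[m, 1]\<close> with \<open>m = \<surd>(1 - q\<^sub>c\<^sup>2)\<close>.  The chain rule gives \<open>u' = (q / slope) \<circ> y\<close> and
  \<open>u'' = (q' / slope\<^sup>4) \<circ> y\<close>, and the substitution \<open>s = x t\<close> turns \<open>\<integral> u\<^sup>2\<close>, \<open>\<integral> u'\<^sup>2\<close>, \<open>\<integral> u''\<^sup>2\<close> into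
  \<open>\<integral> slope p\<^sup>2\<close>, \<open>\<integral> q\<^sup>2 / slope\<close>, \<open>\<integral> q'\<^sup>2 / slope\<^sup>7\<close>.  Bounding the weights between \<open>m\<close> and \<open>m\<^sup>-\<^sup>8\<close>
  gives the theorem with \<open>C\<^sup>- = \<surd>m\<close> and \<open>C\<^sup>+ = m\<^sup>-\<^sup>4\<close>.
\<close>

section \<open>Smooth functions\<close>

text \<open>This recursive form makes the closure properties of smooth functions provable by induction.\<close>

fun differentiable_upto :: "nat \<Rightarrow> (real \<Rightarrow> real) \<Rightarrow> bool" where
  "differentiable_upto 0 f = (\<forall>t. f differentiable (at t))"
| "differentiable_upto (Suc k) f
    = ((\<forall>t. f differentiable (at t)) \<and> differentiable_upto k (deriv f))"

definition smooth :: "(real \<Rightarrow> real) \<Rightarrow> bool" where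
  "smooth f \<longleftrightarrow> (\<forall>k. differentiable_upto k f)"

lemma differentiable_upto_iff:
  "differentiable_upto k f \<longleftrightarrow> (\<forall>j\<le>k. \<forall>t. (deriv ^^ j) f differentiable (at t))"
proof (induction k arbitrary: f)
  case 0 then show ?case by simp
next
  case (Suc k)
  have "(\<forall>j\<le>Suc k. \<forall>t. (deriv ^^ j) f differentiable (at t)) \<longleftrightarrow>
        (\<forall>t. f differentiable (at t)) \<and> (\<forall>j\<le>k. \<forall>t. (deriv ^^ j) (deriv f) differentiable (at t))"
    (is "?L \<longleftrightarrow> ?R")
  proof
    assume L: ?L
    show ?R
    proof (intro conjI allI impI)
      fix t show "f differentiable (at t)" using L[rule_format, of 0] by simp
    next
      fix j t assume "j \<le> k"
      then show "(deriv ^^ j) (deriv f) differentiable (at t)"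
        using L[rule_format, of "Suc j"] by (simp add: funpow_Suc_right del: funpow.simps)
    qed
  next
    assume R: ?R
    show ?L
    proof (intro allI impI)
      fix j t assume j: "j \<le> Suc k"
      show "(deriv ^^ j) f differentiable (at t)"
      proof (cases j)
        case 0 then show ?thesis using R by simp
      next
        case (Suc j')
        then show ?thesis using R j by (simp add: funpow_Suc_right del: funpow.simps)
      qed
    qed
  qed
  then show ?case using Suc.IH by simp
qed

lemma test_fun_iff: "test_fun \<phi> \<longleftrightarrow> smooth \<phi> \<and> (\<exists>R. \<forall>t. R < \<bar>t\<bar> \<longrightarrow> \<phi> t = 0)"
  unfolding test_fun_def smooth_def differentiable_upto_iff by blast

lemma differentiable_upto_differentiable: "differentiable_upto k f \<Longrightarrow> f differentiable (at t)"
  by (cases k) auto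

lemma differentiable_upto_Suc_imp: "differentiable_upto (Suc k) f \<Longrightarrow> differentiable_upto k f"
proof (induction k arbitrary: f)
  case 0 then show ?case by simp
next
  case (Suc k) then show ?case by simp
qed

lemma differentiable_upto_add: "differentiable_upto k f \<Longrightarrow> differentiable_upto k g
    \<Longrightarrow> differentiable_upto k (\<lambda>t. f t + g t)"
proof (induction k arbitrary: f g)
  case 0 then show ?case by auto
next
  case (Suc k)
  have df: "\<And>t. f differentiable (at t)" and dg: "\<And>t. g differentiable (at t)" using Suc.prems
    by auto
  have "deriv (\<lambda>t. f t + g t) = (\<lambda>t. deriv f t + deriv g t)"
    by (rule ext, rule DERIV_imp_deriv,
        intro DERIV_add DERIV_deriv_iff_real_differentiable[THEN iffD2] df dg)
  then show ?case using Suc df dg by auto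
qed

lemma differentiable_upto_cmult: "differentiable_upto k f \<Longrightarrow> differentiable_upto k (\<lambda>t. c * f t)"
proof (induction k arbitrary: f)
  case 0 then show ?case by auto
next
  case (Suc k)
  have df: "\<And>t. f differentiable (at t)" using Suc.prems by auto
  have "deriv (\<lambda>t. c * f t) = (\<lambda>t. c * deriv f t)"
    by (rule ext, rule DERIV_imp_deriv,
        intro DERIV_cmult DERIV_deriv_iff_real_differentiable[THEN iffD2] df)
  then show ?case using Suc df by auto
qed

lemma differentiable_upto_diff: "differentiable_upto k f \<Longrightarrow> differentiable_upto k g
    \<Longrightarrow> differentiable_upto k (\<lambda>t. f t - g t)"
  using differentiable_upto_add[of k f "\<lambda>t. (-1) * g t"] differentiable_upto_cmult[of k g "-1"]
    by simp

lemma differentiable_upto_mult: "differentiable_upto k f \<Longrightarrow> differentiable_upto k g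
    \<Longrightarrow> differentiable_upto k (\<lambda>t. f t * g t)"
proof (induction k arbitrary: f g)
  case 0 then show ?case by auto
next
  case (Suc k)
  have df: "\<And>t. f differentiable (at t)" and dg: "\<And>t. g differentiable (at t)" using Suc.prems
    by auto
  have "((\<lambda>t. f t * g t) has_real_derivative deriv f t * g t + f t * deriv g t) (at t)" for t
    using DERIV_mult[OF DERIV_deriv_iff_real_differentiable[THEN iffD2,
        OF df] DERIV_deriv_iff_real_differentiable[THEN iffD2, OF dg]] by (simp add: mult.commute)
  then have "deriv (\<lambda>t. f t * g t) = (\<lambda>t. deriv f t * g t + f t * deriv g t)"
    by (intro ext DERIV_imp_deriv)
  moreover have "differentiable_upto k (\<lambda>t. deriv f t * g t + f t * deriv g t)"
    using Suc by (intro differentiable_upto_add Suc.IH) (auto intro: differentiable_upto_Suc_imp)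
  ultimately show ?case using df dg by auto
qed

lemma affine_chain_deriv:
  assumes "f differentiable (at (a * t + b))"
  shows "((\<lambda>t. f (a * t + b)) has_real_derivative a * deriv f (a * t + b)) (at t)"
proof -
  have "((\<lambda>t. a * t + b) has_real_derivative a) (at t)" by (auto intro!: derivative_eq_intros)
  from DERIV_chain2[OF DERIV_deriv_iff_real_differentiable[THEN iffD2, OF assms] this]
  show ?thesis by (simp add: mult.commute)
qed

lemma differentiable_upto_affine:
  "differentiable_upto k f \<Longrightarrow> differentiable_upto k (\<lambda>t. f (a * t + b))"
proof (induction k arbitrary: f)
  case 0
  then have "((\<lambda>t. f (a * t + b)) has_real_derivative a * deriv f (a * t + b)) (at t)" for t
    by (intro affine_chain_deriv) auto
  then show ?case using real_differentiable_def by auto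
next
  case (Suc k)
  then have D: "((\<lambda>t. f (a * t + b)) has_real_derivative a * deriv f (a * t + b)) (at t)" for t
    by (intro affine_chain_deriv) auto
  then have "deriv (\<lambda>t. f (a * t + b)) = (\<lambda>t. a * deriv f (a * t + b))"
    by (intro ext DERIV_imp_deriv)
  moreover have "differentiable_upto k (\<lambda>t. a * deriv f (a * t + b))"
    using Suc by (intro differentiable_upto_cmult Suc.IH) auto
  ultimately show ?case using D real_differentiable_def by auto
qed

lemma differentiable_upto_primitive: "(\<And>t. (F has_real_derivative f t) (at t))
    \<Longrightarrow> differentiable_upto k f \<Longrightarrow> differentiable_upto (Suc k) F"
proof -
  assume D: "\<And>t. (F has_real_derivative f t) (at t)" and k: "differentiable_upto k f"
  have "deriv F = f" by (rule ext, rule DERIV_imp_deriv, rule D)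
  then show ?thesis using D k real_differentiable_def by auto
qed

lemma smooth_prim: "(\<And>t. (F has_real_derivative f t) (at t)) \<Longrightarrow> smooth f \<Longrightarrow> smooth F"
  unfolding smooth_def by (metis differentiable_upto_primitive differentiable_upto_Suc_imp)

lemma smooth_diff: "smooth f \<Longrightarrow> smooth g \<Longrightarrow> smooth (\<lambda>t. f t - g t)"
  and smooth_mult: "smooth f \<Longrightarrow> smooth g \<Longrightarrow> smooth (\<lambda>t. f t * g t)"
  and smooth_cmult: "smooth f \<Longrightarrow> smooth (\<lambda>t. c * f t)"
  and smooth_affine: "smooth f \<Longrightarrow> smooth (\<lambda>t. f (a * t + b))"
  unfolding smooth_def
  by (auto intro: differentiable_upto_diff differentiable_upto_mult differentiable_upto_cmult
      differentiable_upto_affine)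

lemma smooth_differentiable: "smooth f \<Longrightarrow> f differentiable (at t)"
  unfolding smooth_def using differentiable_upto_differentiable by blast

lemma smooth_deriv: "smooth f \<Longrightarrow> smooth (deriv f)"
  unfolding smooth_def by (metis differentiable_upto.simps(2))

lemma smooth_has_deriv: "smooth f \<Longrightarrow> (f has_real_derivative deriv f t) (at t)"
  using smooth_differentiable DERIV_deriv_iff_real_differentiable[THEN iffD2] by blast

lemma smooth_cont: "smooth f \<Longrightarrow> continuous_on A f"
  by (meson continuous_at_imp_continuous_on differentiable_imp_continuous_within
      smooth_differentiable)

lemma smooth_isCont: "smooth f \<Longrightarrow> isCont f t"
  by (simp add: differentiable_imp_continuous_within smooth_differentiable)

section \<open>A smooth bump function\<close>

lemma poly_times_exp_minus_lim: "((\<lambda>u::real. poly Q u * exp (- u)) \<longlongrightarrow> 0) at_top"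
proof -
  have eq: "poly Q u * exp (- u) = (\<Sum>i\<le>degree Q. coeff Q i * (u ^ i / exp u))" for u
    by (simp add: poly_altdef exp_minus divide_inverse sum_distrib_right mult.assoc)
  show ?thesis unfolding eq
    by (intro tendsto_null_sum tendsto_mult_right_zero tendsto_power_div_exp_0)
qed

text \<open>\<open>exp_inv P t = P(1/t) e\<^sup>-\<^sup>1\<^sup>/\<^sup>t\<close> for \<open>t > 0\<close> and \<open>0\<close> otherwise; the derivative of such a
  function is again of this form, with the polynomial \<open>exp_inv_step P\<close>.\<close>

definition exp_inv :: "real poly \<Rightarrow> real \<Rightarrow> real" where
  "exp_inv P t = (if 0 < t then poly P (inverse t) * exp (- inverse t) else 0)"

definition exp_inv_step :: "real poly \<Rightarrow> real poly" where
  "exp_inv_step P = monom 1 2 * (P - pderiv P)"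

lemma exp_inv_lim_0: "((\<lambda>h::real. poly Q (inverse h) * exp (- inverse h)) \<longlongrightarrow> 0) (at_right 0)"
  using filterlim_compose[of "\<lambda>u. poly Q u * exp (-u)" "nhds 0" at_top inverse "at_right 0",
     OF poly_times_exp_minus_lim filterlim_inverse_at_top_right] by simp

lemma exp_inv_deriv: "(exp_inv P has_real_derivative exp_inv (exp_inv_step P) t) (at t)"
proof -
  consider "t > 0" | "t < 0" | "t = 0" by linarith
  then show ?thesis
  proof cases
    case 1
    let ?g = "\<lambda>t. poly P (inverse t) * exp (- inverse t)"
    have "(?g has_real_derivative
           (poly (pderiv P) (inverse t) * (- (inverse t ^ 2))) * exp (- inverse t) +
            poly P (inverse t) * (exp (- inverse t) * (inverse t ^ 2))) (at t)"
      using 1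
      by (auto intro!: derivative_eq_intros DERIV_chain2[OF poly_DERIV]
           simp: power2_eq_square field_simps)
    moreover have "(poly (pderiv P) (inverse t) * (- (inverse t ^ 2))) * exp (- inverse t) +
            poly P (inverse t) * (exp (- inverse t) * (inverse t ^ 2)) = exp_inv (exp_inv_step P) t"
      using 1 by (simp add: exp_inv_def exp_inv_step_def poly_monom algebra_simps)
    ultimately have "(?g has_real_derivative exp_inv (exp_inv_step P) t) (at t)" by simp
    then show ?thesis
      by (rule has_field_derivative_transform_within_open[of _ _ _ "{0<..}"])
         (use 1 in \<open>auto simp: exp_inv_def\<close>)
  next
    case 2
    have "((\<lambda>t. 0) has_real_derivative 0) (at t)" by simp
    then have "((\<lambda>t. 0) has_real_derivative exp_inv (exp_inv_step P) t) (at t)" using 2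
      by (simp add: exp_inv_def)
    then show ?thesis
      by (rule has_field_derivative_transform_within_open[of _ _ _ "{..<0}"])
         (use 2 in \<open>auto simp: exp_inv_def\<close>)
  next
    case 3
    have R: "((\<lambda>h. (exp_inv P (0 + h) - exp_inv P 0) / h) \<longlongrightarrow> 0) (at_right 0)"
    proof -
      have "((\<lambda>h. poly (pCons 0 P) (inverse h) * exp (- inverse h)) \<longlongrightarrow> 0) (at_right 0)"
        by (rule exp_inv_lim_0)
      then show ?thesis
        by (rule Lim_transform_eventually)
           (auto simp: eventually_at_right_field exp_inv_def field_simps intro!: exI[of _ 1])
    qed
    have L: "((\<lambda>h. (exp_inv P (0 + h) - exp_inv P 0) / h) \<longlongrightarrow> 0) (at_left 0)"
    proof -
      have "((\<lambda>h. 0::real) \<longlongrightarrow> 0) (at_left 0)" by simp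
      then show ?thesis
        by (rule Lim_transform_eventually)
           (auto simp: eventually_at_left_field exp_inv_def intro!: exI[of _ "-1"])
    qed
    have "((\<lambda>h. (exp_inv P (0 + h) - exp_inv P 0) / h) \<longlongrightarrow> 0) (at 0)"
      using L R by (simp add: filterlim_split_at)
    then show ?thesis using 3 by (simp add: DERIV_def exp_inv_def)
  qed
qed

lemma exp_inv_smooth: "smooth (exp_inv P)"
proof -
  have "differentiable_upto k (exp_inv P)" for k
  proof (induction k arbitrary: P)
    case 0 then show ?case using exp_inv_deriv real_differentiable_def by auto
  next
    case (Suc k)
    have "deriv (exp_inv P) = exp_inv (exp_inv_step P)"
      by (rule ext, rule DERIV_imp_deriv, rule exp_inv_deriv)
    then show ?case using Suc exp_inv_deriv real_differentiable_def by auto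
  qed
  then show ?thesis by (simp add: smooth_def)
qed

definition bump :: "real \<Rightarrow> real" where
  "bump t = exp_inv 1 t * exp_inv 1 (1 - t)"

lemma bump_smooth: "smooth bump"
proof -
  have "smooth (\<lambda>t. exp_inv 1 ((-1) * t + 1))" by (rule smooth_affine[OF exp_inv_smooth])
  then show ?thesis unfolding bump_def
    using smooth_mult[OF exp_inv_smooth] by simp
qed

lemma bump_nonneg: "bump t \<ge> 0"
  by (simp add: bump_def exp_inv_def)

lemma bump_zero: "t \<le> 0 \<or> 1 \<le> t \<Longrightarrow> bump t = 0"
  by (auto simp: bump_def exp_inv_def)

lemma bump_pos: "0 < t \<Longrightarrow> t < 1 \<Longrightarrow> bump t > 0"
  by (simp add: bump_def exp_inv_def)

section \<open>Locally integrable functions and test functions\<close>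

definition locally_integrable :: "(real \<Rightarrow> real) \<Rightarrow> bool" where
  "locally_integrable h \<longleftrightarrow> h \<in> borel_measurable lborel \<and> (\<forall>a b. set_integrable lborel {a..b} h)"

text \<open>Square integrable functions are locally integrable (\<open>|h| \<le> 1 + h\<^sup>2\<close>).\<close>

lemma L2_imp_locally_integrable: "L2 h \<Longrightarrow> locally_integrable h"
proof -
  assume "L2 h"
  then have m: "h \<in> borel_measurable lborel" and i: "integrable lborel (\<lambda>t. (h t)\<^sup>2)"
    by (auto simp: L2_def)
  have "set_integrable lborel {a..b} h" for a b
    unfolding set_integrable_def
  proof (rule Bochner_Integration.integrable_bound)
    have "integrable lborel (\<lambda>x. indicator {a..b} x *\<^sub>R (1::real))"
      by (rule borel_integrable_compact) auto
    then show "integrable lborel (\<lambda>t. indicator {a..b} t + (h t)\<^sup>2 :: real)"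
      using i by (intro Bochner_Integration.integrable_add) auto
    show "(\<lambda>x. indicat_real {a..b} x *\<^sub>R h x) \<in> borel_measurable lborel" using m by measurable
    show "AE x in lborel. norm (indicat_real {a..b} x *\<^sub>R h x)
        \<le> norm (indicat_real {a..b} x + (h x)\<^sup>2)"
    proof (rule AE_I2)
      fix x
      have "\<bar>h x\<bar> \<le> 1 + \<bar>h x\<bar> * \<bar>h x\<bar>"
      proof (cases "\<bar>h x\<bar> \<le> 1")
        case True then show ?thesis by (simp add: add_increasing2)
      next
        case False
        then have "\<bar>h x\<bar> * 1 \<le> \<bar>h x\<bar> * \<bar>h x\<bar>" by (intro mult_left_mono) auto
        then show ?thesis by simp
      qed
      then have "\<bar>h x\<bar> \<le> 1 + (h x)\<^sup>2" by (simp add: power2_eq_square abs_mult_self_eq)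
      then show "norm (indicat_real {a..b} x *\<^sub>R h x) \<le> norm (indicat_real {a..b} x + (h x)\<^sup>2)"
        by (auto simp: indicator_def)
    qed
  qed
  then show ?thesis using m by (simp add: locally_integrable_def)
qed

lemma locally_integrable_const: "locally_integrable (\<lambda>t. c)"
proof -
  have "integrable lborel (\<lambda>x. indicator {a..b} x *\<^sub>R c)" for a b :: real
    by (rule borel_integrable_compact) auto
  then show ?thesis by (simp add: locally_integrable_def set_integrable_def)
qed

lemma continuous_compact_support_integrable:
  fixes f :: "real \<Rightarrow> real"
  assumes c: "\<And>t. isCont f t" and s: "\<And>t. R < \<bar>t\<bar> \<Longrightarrow> f t = 0"
  shows "integrable lborel f"
proof -
  have "integrable lborel (\<lambda>x. indicator {-R..R} x *\<^sub>R f x)"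
    by (rule borel_integrable_compact) (auto intro: continuous_at_imp_continuous_on c)
  moreover have "(\<lambda>x. indicator {-R..R} x *\<^sub>R f x) = f"
  proof (rule ext)
    fix x show "indicator {-R..R} x *\<^sub>R f x = f x"
    proof (cases "\<bar>x\<bar> \<le> R")
      case True then show ?thesis by (simp add: indicator_def abs_le_iff)
    next
      case False then show ?thesis using s[of x] by simp
    qed
  qed
  ultimately show ?thesis by simp
qed

lemma continuous_bounded_on_interval:
  fixes f :: "real \<Rightarrow> real"
  assumes c: "\<And>t. isCont f t"
  obtains M where "\<And>t. \<bar>t\<bar> \<le> R \<Longrightarrow> \<bar>f t\<bar> \<le> M"
proof -
  have "compact (f ` {-R..R})"
    by (rule compact_continuous_image) (auto intro: continuous_at_imp_continuous_on c)
  then obtain M where M: "\<forall>y\<in>f ` {-R..R}. norm y \<le> M"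
    by (meson bounded_iff compact_imp_bounded)
  show ?thesis
  proof (rule that)
    fix t :: real assume "\<bar>t\<bar> \<le> R"
    then have "t \<in> {-R..R}" by auto
    then show "\<bar>f t\<bar> \<le> M" using M by auto
  qed
qed

lemma locally_integrable_mult_compact_support:
  assumes h: "locally_integrable h" and c: "\<And>t. isCont f t" and s: "\<And>t. R < \<bar>t\<bar> \<Longrightarrow> f t = 0"
  shows "integrable lborel (\<lambda>t. h t * f t)"
proof -
  obtain M where M: "\<And>t. \<bar>t\<bar> \<le> R \<Longrightarrow> \<bar>f t\<bar> \<le> M" using continuous_bounded_on_interval[OF c] by blast
  have hi: "set_integrable lborel {-R..R} h" and hm: "h \<in> borel_measurable lborel"
    using h by (auto simp: locally_integrable_def)
  have "f \<in> borel_measurable borel"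
    by (rule borel_measurable_continuous_onI) (simp add: continuous_at_imp_continuous_on c)
  then have fm: "f \<in> borel_measurable lborel" by simp
  show ?thesis
  proof (rule Bochner_Integration.integrable_bound)
    show "integrable lborel (\<lambda>t. M * norm (indicat_real {-R..R} t *\<^sub>R h t))"
      using hi unfolding set_integrable_def by (intro integrable_mult_right integrable_norm)
    show "(\<lambda>t. h t * f t) \<in> borel_measurable lborel" using hm fm by measurable
    show "AE x in lborel. norm (h x * f x) \<le> norm (M * norm (indicat_real {-R..R} x *\<^sub>R h x))"
    proof (rule AE_I2)
      fix x
      show "norm (h x * f x) \<le> norm (M * norm (indicat_real {-R..R} x *\<^sub>R h x))"
      proof (cases "\<bar>x\<bar> \<le> R")
        case True
        then have "\<bar>f x\<bar> \<le> M" using M by blast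
        then show ?thesis using True
          by (auto simp: indicator_def abs_mult mult.commute intro: mult_right_mono)
      next
        case False then show ?thesis using s by auto
      qed
    qed
  qed
qed

lemma interval_integral_eq_integral_support:
  fixes f :: "real \<Rightarrow> real"
  assumes s: "\<And>t. R < \<bar>t\<bar> \<Longrightarrow> f t = 0" and "a \<le> -R" "R \<le> b" "a \<le> b"
  shows "(LBINT t=a..b. f t) = (\<integral>t. f t \<partial>lborel)"
proof -
  have "(LBINT t=a..b. f t) = (LBINT t:{a..b}. f t)"
    using assms by (intro interval_integral_Icc) (auto simp: abs_if)
  also have "\<dots> = (\<integral>t. f t \<partial>lborel)"
    unfolding set_lebesgue_integral_def
  proof (rule Bochner_Integration.integral_cong)
    fix x show "indicat_real {a..b} x *\<^sub>R f x = f x"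
    proof (cases "x \<in> {a..b}")
      case True then show ?thesis by simp
    next
      case False then have "R < \<bar>x\<bar>" using assms by auto
      then show ?thesis using s False by simp
    qed
  qed simp
  finally show ?thesis .
qed

lemma primitive_has_derivative:
  fixes f :: "real \<Rightarrow> real" and c0 :: real
  assumes c: "\<And>t. isCont f t"
  shows "((\<lambda>u. LBINT s=c0..u. f s) has_real_derivative f t) (at t)"
proof -
  let ?a = "min c0 t - 1" and ?b = "max c0 t + 1"
  have "((\<lambda>u. LBINT s=c0..u. f s) has_vector_derivative f t) (at t within {?a..?b})"
    by (rule interval_integral_FTC2) (auto intro: continuous_at_imp_continuous_on c)
  moreover have "at t within {?a..?b} = at t"
    by (rule at_within_interior) (auto simp: interior_atLeastAtMost_real)
  ultimately show ?thesis by (simp add: has_real_derivative_iff_has_vector_derivative)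
qed

lemma deriv_outside_support:
  fixes f :: "real \<Rightarrow> real"
  assumes s: "\<And>t. R < \<bar>t\<bar> \<Longrightarrow> f t = 0" and "R < \<bar>t\<bar>"
  shows "deriv f t = 0"
proof (rule DERIV_imp_deriv)
  show "(f has_real_derivative 0) (at t)"
  proof (cases "t > 0")
    case True
    have "((\<lambda>t. 0) has_real_derivative 0) (at t)" by simp
    then show ?thesis
      by (rule has_field_derivative_transform_within_open[of _ _ _ "{R<..}"])
         (use assms True in \<open>auto simp: abs_if split: if_splits\<close>)
  next
    case False
    have "((\<lambda>t. 0) has_real_derivative 0) (at t)" by simp
    then show ?thesis
      by (rule has_field_derivative_transform_within_open[of _ _ _ "{..< -R}"])
         (use assms False in \<open>auto simp: abs_if split: if_splits\<close>)
  qed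
qed

lemma test_fun_deriv: "test_fun \<phi> \<Longrightarrow> test_fun (deriv \<phi>)"
  unfolding test_fun_iff by (metis smooth_deriv deriv_outside_support)

lemma test_fun_isCont: "test_fun \<phi> \<Longrightarrow> isCont \<phi> t"
  unfolding test_fun_iff by (simp add: smooth_isCont)

lemma test_fun_integrable: "test_fun \<phi> \<Longrightarrow> integrable lborel \<phi>"
  unfolding test_fun_iff by (metis continuous_compact_support_integrable smooth_isCont)

lemma locally_integrable_mult_test: "locally_integrable h \<Longrightarrow> test_fun \<phi>
    \<Longrightarrow> integrable lborel (\<lambda>t. h t * \<phi> t)"
  unfolding test_fun_iff by (metis locally_integrable_mult_compact_support smooth_isCont)

section \<open>A normalized bump and a smooth step\<close>

definition bump_mass :: real where "bump_mass = (\<integral>t. bump t \<partial>lborel)"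

lemma bump_integrable: "integrable lborel bump"
  by (rule continuous_compact_support_integrable[of _ 1]) (auto intro: smooth_isCont[OF bump_smooth]
      bump_zero)

lemma bump_mass_pos: "bump_mass > 0"
proof -
  have nn: "bump_mass \<ge> 0" unfolding bump_mass_def by (simp add: bump_nonneg)
  have "bump_mass \<noteq> 0"
  proof
    assume "bump_mass = 0"
    then have "AE x in lborel. bump x = 0"
      using integral_nonneg_eq_0_iff_AE[OF bump_integrable] bump_nonneg unfolding bump_mass_def
        by simp
    then have "AE x in lborel. x \<notin> {0<..<1::real}"
      by eventually_elim (metis bump_pos greaterThanLessThan_iff less_irrefl)
    then have "emeasure lborel {0<..<1::real} = 0"
      by (subst (asm) AE_iff_measurable[of "{0<..<1}" lborel]) auto
    then show False by simp
  qed
  with nn show ?thesis by simp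
qed

definition unit_bump :: "real \<Rightarrow> real" where "unit_bump t = bump t / bump_mass"

lemma unit_bump_smooth: "smooth unit_bump"
  unfolding unit_bump_def using smooth_cmult[OF bump_smooth, of "inverse bump_mass"]
  by (simp add: divide_inverse mult.commute)

lemma unit_bump_nonneg: "unit_bump t \<ge> 0" using bump_mass_pos bump_nonneg
  by (simp add: unit_bump_def)
lemma unit_bump_zero: "t \<le> 0 \<or> 1 \<le> t \<Longrightarrow> unit_bump t = 0" by (simp add: unit_bump_def bump_zero)
lemma unit_bump_support: "1 < \<bar>t\<bar> \<Longrightarrow> unit_bump t = 0"
  by (rule unit_bump_zero) (auto simp: abs_if split: if_splits)
lemma unit_bump_test: "test_fun unit_bump" unfolding test_fun_iff
  using unit_bump_smooth unit_bump_support by blast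
lemma unit_bump_integral: "(\<integral>t. unit_bump t \<partial>lborel) = 1"
  using bump_mass_pos unfolding unit_bump_def bump_mass_def by simp

definition smooth_step :: "real \<Rightarrow> real" where "smooth_step t = (LBINT s=0..t. unit_bump s)"

lemma smooth_step_deriv: "(smooth_step has_real_derivative unit_bump t) (at t)"
  using primitive_has_derivative[of unit_bump 0 t] smooth_isCont[OF unit_bump_smooth]
    unfolding smooth_step_def[abs_def] by (simp add: zero_ereal_def)

lemma smooth_step_smooth: "smooth smooth_step"
  by (rule smooth_prim[OF smooth_step_deriv unit_bump_smooth])

lemma smooth_step_mono: "a \<le> b \<Longrightarrow> smooth_step a \<le> smooth_step b"
  by (rule DERIV_nonneg_imp_nondecreasing) (use smooth_step_deriv unit_bump_nonneg in blast)+

lemma smooth_step_zero: "t \<le> 0 \<Longrightarrow> smooth_step t = 0"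
proof -
  assume "t \<le> 0"
  then have "(LBINT s=0..t. unit_bump s) = (LBINT s=0..t. 0)"
    by (intro interval_integral_cong) (auto simp: unit_bump_zero einterval_iff zero_ereal_def)
  then show ?thesis by (simp add: smooth_step_def)
qed

lemma smooth_step_one: "1 \<le> t \<Longrightarrow> smooth_step t = 1"
proof -
  assume "1 \<le> t"
  have "(LBINT s=0..t. unit_bump s) = (\<integral>s. unit_bump s \<partial>lborel)"
  proof -
    have "(LBINT s=0..t. unit_bump s) = (LBINT s:{0..t}. unit_bump s)"
      using \<open>1 \<le> t\<close> interval_integral_Icc[of 0 t unit_bump] by (simp add: zero_ereal_def)
    also have "\<dots> = (\<integral>s. unit_bump s \<partial>lborel)"
      unfolding set_lebesgue_integral_def
    proof (rule Bochner_Integration.integral_cong)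
      fix x
      have nz: "unit_bump x \<noteq> 0 \<Longrightarrow> 0 < x \<and> x < 1" using unit_bump_zero[of x] by force
      show "indicat_real {0..t} x *\<^sub>R unit_bump x = unit_bump x"
        using nz \<open>1 \<le> t\<close> by (cases "unit_bump x = 0") (auto simp: indicator_def)
    qed simp
    finally show ?thesis .
  qed
  then show ?thesis by (simp add: smooth_step_def unit_bump_integral)
qed

lemma smooth_step_bounds: "0 \<le> smooth_step t" "smooth_step t \<le> 1"
proof -
  show "0 \<le> smooth_step t"
    by (cases "t
        \<le> 0") (auto simp: smooth_step_zero intro: order.trans[OF _ smooth_step_mono[of 0 t]])
  show "smooth_step t \<le> 1"
    by (cases "1 \<le> t") (auto simp: smooth_step_one intro: order.trans[OF smooth_step_mono[of t 1]])
qed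

lemma test_fun_support: "test_fun \<phi> \<Longrightarrow> \<exists>R\<ge>0. \<forall>t. R < \<bar>t\<bar> \<longrightarrow> \<phi> t = 0"
  unfolding test_fun_def by (metis abs_ge_zero le_less_trans max.cobounded1 max.cobounded2 not_le)

lemma test_funI: "smooth \<phi> \<Longrightarrow> (\<And>t. R < \<bar>t\<bar> \<Longrightarrow> \<phi> t = 0) \<Longrightarrow> test_fun \<phi>"
  unfolding test_fun_iff by blast

lemma test_fun_lincomb: "test_fun \<phi> \<Longrightarrow> test_fun \<psi> \<Longrightarrow> test_fun (\<lambda>t. \<phi> t - c * \<psi> t)"
proof -
  assume a: "test_fun \<phi>" "test_fun \<psi>"
  obtain R1 where R1: "\<forall>t. R1 < \<bar>t\<bar> \<longrightarrow> \<phi> t = 0" using a test_fun_support by blast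
  obtain R2 where R2: "\<forall>t. R2 < \<bar>t\<bar> \<longrightarrow> \<psi> t = 0" using a test_fun_support by blast
  show ?thesis
  proof (rule test_funI)
    show "smooth (\<lambda>t. \<phi> t - c * \<psi> t)" using a unfolding test_fun_iff
      by (intro smooth_diff smooth_cmult) auto
    fix t assume "max R1 R2 < \<bar>t\<bar>" then show "\<phi> t - c * \<psi> t = 0" using R1 R2 by auto
  qed
qed

lemma test_fun_primitive:
  assumes t: "test_fun \<psi>" and z: "(\<integral>t. \<psi> t \<partial>lborel) = 0"
  shows "\<exists>\<Phi>. test_fun \<Phi> \<and> (\<forall>t. deriv \<Phi> t = \<psi> t)"
proof -
  obtain R where R0: "R \<ge> 0" and R: "\<And>t. R < \<bar>t\<bar> \<Longrightarrow> \<psi> t = 0" using test_fun_support[OF t] by blast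
  define L where "L = - R - 1"
  define \<Phi> where "\<Phi> u = (LBINT s=L..u. \<psi> s)" for u
  have D: "(\<Phi> has_real_derivative \<psi> u) (at u)" for u
    unfolding \<Phi>_def[abs_def] by (rule primitive_has_derivative) (rule test_fun_isCont[OF t])
  have sm: "smooth \<Phi>"
    by (rule smooth_prim[OF D]) (use t in \<open>simp add: test_fun_iff\<close>)
  have supp: "\<Phi> u = 0" if "R + 1 < \<bar>u\<bar>" for u
  proof (cases "u < 0")
    case True
    then have "u < L" using that by (auto simp: L_def)
    then have "(LBINT s=L..u. \<psi> s) = (LBINT s=L..u. 0)"
      by (intro interval_integral_cong) (auto simp: einterval_iff L_def intro!: R)
    then show ?thesis by (simp add: \<Phi>_def)
  next
    case False
    then have "\<Phi> u = (\<integral>t. \<psi> t \<partial>lborel)" unfolding \<Phi>_def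
      using that R0 by (intro interval_integral_eq_integral_support[of R]) (auto simp: L_def R)
    then show ?thesis using z by simp
  qed
  have "test_fun \<Phi>" by (rule test_funI[OF sm supp])
  moreover have "deriv \<Phi> t = \<psi> t" for t by (rule DERIV_imp_deriv[OF D])
  ultimately show ?thesis by blast
qed

section \<open>Smooth approximations of indicator functions\<close>

text \<open>\<open>approx_indicator a b n\<close> is a test function that converges pointwise to the indicator of
  \<open>(a, b]\<close> as \<open>n \<rightarrow> \<infinity>\<close>, bounded by the indicator of \<open>[a, b + 1]\<close>.\<close>

definition approx_indicator :: "real \<Rightarrow> real \<Rightarrow> real \<Rightarrow> real \<Rightarrow> real" where
  "approx_indicator a b n t = smooth_step (n * (t - a)) - smooth_step (n * (t - b))"

lemma approx_indicator_smooth: "smooth (approx_indicator a b n)"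
proof -
  have 1: "smooth (\<lambda>t. smooth_step (n * t + (- n * a)))"
    by (rule smooth_affine[OF smooth_step_smooth])
  have 2: "smooth (\<lambda>t. smooth_step (n * t + (- n * b)))"
    by (rule smooth_affine[OF smooth_step_smooth])
  show ?thesis using smooth_diff[OF 1 2] unfolding approx_indicator_def[abs_def]
    by (simp add: algebra_simps)
qed

lemma approx_indicator_zero:
  assumes "a \<le> b" "1 \<le> n" "t \<le> a \<or> b + 1 \<le> t"
  shows "approx_indicator a b n t = 0"
proof (cases "t \<le> a")
  case True
  then have "n * (t - a) \<le> 0" "n * (t - b) \<le> 0" using assms
    by (auto intro: mult_nonneg_nonpos)
  then show ?thesis by (simp add: approx_indicator_def smooth_step_zero)
next
  case False
  then have t: "b + 1 \<le> t" using assms by auto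
  have "1 \<le> n * (t - b)"
  proof -
    have "1 * 1 \<le> n * (t - b)" using assms t by (intro mult_mono) auto
    then show ?thesis by simp
  qed
  moreover have "1 \<le> n * (t - a)"
  proof -
    have "1 * 1 \<le> n * (t - a)" using assms t by (intro mult_mono) auto
    then show ?thesis by simp
  qed
  ultimately show ?thesis by (simp add: approx_indicator_def smooth_step_one)
qed

lemma approx_indicator_test: "a \<le> b \<Longrightarrow> 1 \<le> n \<Longrightarrow> test_fun (approx_indicator a b n)"
  by (rule test_funI[where R="\<bar>a\<bar> + \<bar>b\<bar> + 1",
      OF approx_indicator_smooth]) (rule approx_indicator_zero, auto simp: abs_if split: if_splits)

lemma approx_indicator_bound: "a \<le> b \<Longrightarrow> 0 \<le> n \<Longrightarrow> \<bar>approx_indicator a b n t\<bar> \<le> 1"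
proof -
  assume "a \<le> b" "0 \<le> n"
  then have "n * (t - b) \<le> n * (t - a)" by (intro mult_left_mono) auto
  then have "smooth_step (n * (t - b)) \<le> smooth_step (n * (t - a))" by (rule smooth_step_mono)
  then show ?thesis using smooth_step_bounds[of "n * (t - a)"] smooth_step_bounds[of "n * (t - b)"]
    by (simp add: approx_indicator_def)
qed

lemma approx_indicator_lim:
  assumes "a \<le> b"
  shows "(\<lambda>n. approx_indicator a b (real (Suc n)) t) \<longlonglongrightarrow> indicator {a<..b} t"
proof -
  consider "t \<le> a" | "a < t" "t \<le> b" | "b < t" by linarith
  then show ?thesis
  proof cases
    case 1
    have "approx_indicator a b (real (Suc n)) t = 0" for n using assms 1
      by (intro approx_indicator_zero) auto
    then show ?thesis using 1 by (simp add: indicator_def)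
  next
    case 2
    obtain N :: nat where N: "1 / (t - a) \<le> N" using real_arch_simple by blast
    have "eventually (\<lambda>n. approx_indicator a b (real (Suc n)) t = 1) sequentially"
      unfolding eventually_sequentially
    proof (intro exI allI impI)
      fix n assume "N \<le> n"
      then have "1 / (t - a) \<le> real (Suc n)" using N by linarith
      then have "1 \<le> real (Suc n) * (t - a)" using 2 by (simp add: field_simps)
      moreover have "real (Suc n) * (t - b) \<le> 0" using 2 by (simp add: mult_nonneg_nonpos)
      ultimately show "approx_indicator a b (real (Suc n)) t = 1"
        by (simp add: approx_indicator_def smooth_step_one smooth_step_zero)
    qed
    then have "(\<lambda>n. approx_indicator a b (real (Suc n)) t) \<longlonglongrightarrow> 1" by (rule tendsto_eventually)
    then show ?thesis using 2 by (simp add: indicator_def)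
  next
    case 3
    obtain N :: nat where N: "1 / (t - b) \<le> N" using real_arch_simple by blast
    have "eventually (\<lambda>n. approx_indicator a b (real (Suc n)) t = 0) sequentially"
      unfolding eventually_sequentially
    proof (intro exI allI impI)
      fix n assume "N \<le> n"
      then have "1 / (t - b) \<le> real (Suc n)" using N by linarith
      then have 1: "1 \<le> real (Suc n) * (t - b)" using 3 by (simp add: field_simps)
      moreover have "real (Suc n) * (t - b) \<le> real (Suc n) * (t - a)" using 3 assms
        by (intro mult_left_mono) auto
      ultimately have "1 \<le> real (Suc n) * (t - a)" by linarith
      with 1 show "approx_indicator a b (real (Suc n)) t = 0"
        by (simp add: approx_indicator_def smooth_step_one del: of_nat_Suc)
    qed
    then have "(\<lambda>n. approx_indicator a b (real (Suc n)) t) \<longlonglongrightarrow> 0" by (rule tendsto_eventually)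
    then show ?thesis using 3 by (simp add: indicator_def)
  qed
qed

lemma approx_indicator_measurable: "approx_indicator a b n \<in> borel_measurable lborel"
proof -
  have "approx_indicator a b n \<in> borel_measurable borel"
    by (rule borel_measurable_continuous_onI) (rule smooth_cont[OF approx_indicator_smooth])
  then show ?thesis by simp
qed

section \<open>Weak derivatives\<close>

text \<open>Integrals against the approximate indicators converge to the integral over \<open>(a, b]\<close>, by
  dominated convergence with the dominating function \<open>|h|\<close> on \<open>[a, b + 1]\<close>.\<close>

lemma approx_indicator_integral_lim:
  fixes a b :: real
  assumes h: "locally_integrable h" and ab: "a \<le> b"
  shows "(\<lambda>n. \<integral>t. h t * approx_indicator a b (real (Suc n)) t \<partial>lborel)
    \<longlonglongrightarrow> (LBINT t=a..b. h t)"
proof -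
  have hm[measurable]: "h \<in> borel_measurable lborel" and hi: "set_integrable lborel {a..b+1} h"
    using h by (auto simp: locally_integrable_def)
  let ?s = "\<lambda>n t. h t * approx_indicator a b (real (Suc n)) t"
  let ?w = "\<lambda>t. indicator {a..b+1} t * \<bar>h t\<bar>"
  have bnd: "\<bar>approx_indicator a b (real (Suc n)) t\<bar> \<le> indicator {a..b+1} t" for n t
  proof (cases "t \<in> {a..b+1}")
    case True then show ?thesis using approx_indicator_bound[OF ab, of "real (Suc n)" t] by simp
  next
    case False
    then have "approx_indicator a b (real (Suc n)) t = 0" using ab
      by (intro approx_indicator_zero) auto
    then show ?thesis by simp
  qed
  have "(\<lambda>n. \<integral>t. ?s n t \<partial>lborel) \<longlonglongrightarrow> (\<integral>t. h t * indicator {a<..b} t \<partial>lborel)"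
  proof (rule integral_dominated_convergence[where w = ?w])
    show "integrable lborel ?w"
      using integrable_norm[OF hi[unfolded set_integrable_def]] by (simp add: abs_mult)
    show "(\<lambda>t. h t * indicat_real {a<..b} t) \<in> borel_measurable lborel" by measurable
    show "?s n \<in> borel_measurable lborel" for n using approx_indicator_measurable by measurable
    show "AE t in lborel. (\<lambda>n. ?s n t) \<longlonglongrightarrow> h t * indicat_real {a<..b} t"
      by (intro AE_I2 tendsto_mult_left approx_indicator_lim ab)
    show "AE t in lborel. norm (?s n t) \<le> ?w t" for n
      using bnd by (intro AE_I2) (auto simp: abs_mult mult.commute intro: mult_left_mono)
  qed
  moreover have "(LBINT t=a..b. h t) = (\<integral>t. h t * indicator {a<..b} t \<partial>lborel)"
    using ab by (simp add: interval_integral_Ioc set_lebesgue_integral_def mult.commute)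
  ultimately show ?thesis by simp
qed

text \<open>If \<open>\<integral> h \<phi> = c \<integral> \<phi>\<close> for all test functions \<open>\<phi>\<close>, then the integral of \<open>h\<close> over \<open>[a, b]\<close>
  is \<open>c (b - a)\<close>: test against the approximate indicators and pass to the limit.\<close>

lemma interval_integral_from_test_functions:
  fixes a b c :: real
  assumes h: "locally_integrable h"
    and H: "\<And>\<psi>. test_fun \<psi> \<Longrightarrow> (\<integral>t. h t * \<psi> t \<partial>lborel) = c * (\<integral>t. \<psi> t \<partial>lborel)"
    and ab: "a \<le> b"
  shows "(LBINT t=a..b. h t) = c * (b - a)"
proof -
  let ?\<psi> = "\<lambda>n. approx_indicator a b (real (Suc n))"
  have "(\<lambda>n. \<integral>t. h t * ?\<psi> n t \<partial>lborel) \<longlonglongrightarrow> (LBINT t=a..b. h t)"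
    by (rule approx_indicator_integral_lim[OF h ab])
  moreover have "(\<lambda>n. \<integral>t. h t * ?\<psi> n t \<partial>lborel) \<longlonglongrightarrow> c * (LBINT t=a..b. 1)"
  proof -
    have "(\<lambda>n. \<integral>t. 1 * ?\<psi> n t \<partial>lborel) \<longlonglongrightarrow> (LBINT t=a..b. 1)"
      by (rule approx_indicator_integral_lim[OF locally_integrable_const ab])
    then show ?thesis using H[OF approx_indicator_test] ab by (simp add: tendsto_mult_left)
  qed
  ultimately have "(LBINT t=a..b. h t) = c * (LBINT t=a..b. 1)" by (rule LIMSEQ_unique)
  then show ?thesis using ab by simp
qed

lemma emeasure_density_integral:
  fixes g :: "real \<Rightarrow> real"
  assumes [measurable]: "A \<in> sets borel" "g \<in> borel_measurable lborel"
    and nonneg: "\<And>t. g t \<ge> 0" and int: "integrable lborel (\<lambda>t. g t * indicator A t)"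
  shows "emeasure (density lborel (\<lambda>t. ennreal (g t))) A
      = ennreal (\<integral>t. g t * indicator A t \<partial>lborel)"
proof -
  have "emeasure (density lborel (\<lambda>t. ennreal (g t))) A
      = (\<integral>\<^sup>+ t. ennreal (g t) * indicator A t \<partial>lborel)"
    by (rule emeasure_density) auto
  also have "\<dots> = (\<integral>\<^sup>+ t. ennreal (g t * indicator A t) \<partial>lborel)"
    by (intro nn_integral_cong) (auto simp: indicator_def)
  also have "\<dots> = ennreal (\<integral>t. g t * indicator A t \<partial>lborel)"
    by (rule nn_integral_eq_integral[OF int]) (auto simp: nonneg)
  finally show ?thesis .
qed

text \<open>An integrable function whose integrals over all half-lines \<open>(x, \<infinity>)\<close> vanish is zero
  almost everywhere: its positive and negative parts are densities of measures that agree on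
  all half-lines, hence coincide.\<close>

lemma AE_zero_if_half_line_integrals_zero:
  fixes f :: "real \<Rightarrow> real"
  assumes f: "integrable lborel f" and zero: "\<And>x. (\<integral>t. indicator {x<..} t * f t \<partial>lborel) = 0"
  shows "AE t in lborel. f t = 0"
proof -
  have [measurable]: "f \<in> borel_measurable lborel" using f by simp
  let ?P = "\<lambda>t. ennreal (max 0 (f t))" and ?N = "\<lambda>t. ennreal (max 0 (- f t))"
  have int_pos: "integrable lborel (\<lambda>t. max 0 (f t) * indicator A t)"
    and int_neg: "integrable lborel (\<lambda>t. max 0 (- f t) * indicator A t)"
    if [measurable]: "A \<in> sets borel" for A
    by (rule Bochner_Integration.integrable_bound[OF integrable_norm[OF f]];
        auto simp: indicator_def)+
  have "density lborel ?P = density lborel ?N"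
  proof (rule measure_eqI_lessThan)
    show "sets (density lborel ?P) = sets borel" "sets (density lborel ?N) = sets borel" by auto
    fix x :: real
    have mp: "emeasure (density lborel ?P) {x<..}
        = ennreal (\<integral>t. max 0 (f t) * indicator {x<..} t \<partial>lborel)"
      by (rule emeasure_density_integral) (auto intro: int_pos)
    have mn: "emeasure (density lborel ?N) {x<..}
        = ennreal (\<integral>t. max 0 (- f t) * indicator {x<..} t \<partial>lborel)"
      by (rule emeasure_density_integral) (auto intro: int_neg)
    show "emeasure (density lborel ?P) {x<..} < \<infinity>" unfolding mp by simp
    have "(\<integral>t. max 0 (f t) * indicator {x<..} t \<partial>lborel)
        - (\<integral>t. max 0 (- f t) * indicator {x<..} t \<partial>lborel)
        = (\<integral>t. max 0 (f t) * indicator {x<..} t - max 0 (- f t) * indicator {x<..} t \<partial>lborel)"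
      by (rule Bochner_Integration.integral_diff[symmetric]) (auto intro: int_pos int_neg)
    also have "\<dots> = (\<integral>t. indicator {x<..} t * f t \<partial>lborel)"
      by (intro Bochner_Integration.integral_cong) (auto simp: indicator_def max_def)
    also have "\<dots> = 0" by (rule zero)
    finally show "emeasure (density lborel ?P) {x<..} = emeasure (density lborel ?N) {x<..}"
      unfolding mp mn by simp
  qed
  then have "AE t in lborel. ?P t = ?N t"
    by (intro sigma_finite_measure.density_unique[OF sigma_finite_lborel]) auto
  then show ?thesis by eventually_elim (auto simp: max_def split: if_splits)
qed

text \<open>A locally integrable function with vanishing integrals over all intervals vanishes almost
  everywhere: apply the previous lemma to its truncations to \<open>(-n, n]\<close>.\<close>

lemma AE_zero_if_interval_integrals_zero:
  assumes k: "locally_integrable k" and Z: "\<And>(a::real) (b::real). a \<le> b \<Longrightarrow> (LBINT t=a..b. k t) = 0"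
  shows "AE t in lborel. k t = 0"
proof -
  have km[measurable]: "k \<in> borel_measurable lborel" using k by (simp add: locally_integrable_def)
  define kn where "kn n t = indicator {- real n<..real n} t * k t" for n :: nat and t
  have kn_i: "integrable lborel (kn n)" for n
  proof -
    have "set_integrable lborel {- real n..real n} k" using k by (simp add: locally_integrable_def)
    then have "set_integrable lborel {- real n<..real n} k" by (rule set_integrable_subset) auto
    then show ?thesis by (simp add: set_integrable_def kn_def[abs_def])
  qed
  have half_lines: "(\<integral>t. indicator {x<..} t * kn n t \<partial>lborel) = 0" for n x
  proof -
    define a where "a = max x (- real n)"
    have eq: "indicator {x<..} t * kn n t = indicator {a<..real n} t * k t" for t
      by (auto simp: kn_def indicator_def a_def)
    show ?thesis
    proof (cases "a \<le> real n")
      case True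
      have "(\<integral>t. indicator {a<..real n} t * k t \<partial>lborel) = (LBINT t=a..real n. k t)"
        using True by (simp add: interval_integral_Ioc set_lebesgue_integral_def)
      also have "\<dots> = 0" using Z[of a "real n"] True by simp
      finally show ?thesis unfolding eq .
    next
      case False
      then have "indicator {a<..real n} t = (0::real)" for t by (auto simp: indicator_def)
      then show ?thesis unfolding eq by simp
    qed
  qed
  have "AE t in lborel. kn n t = 0" for n
    by (rule AE_zero_if_half_line_integrals_zero[OF kn_i half_lines])
  then have "AE t in lborel. \<forall>n. kn n t = 0" by (simp add: AE_all_countable)
  then show ?thesis
  proof eventually_elim
    fix t assume a: "\<forall>n. kn n t = 0"
    obtain n :: nat where "\<bar>t\<bar> < n" using reals_Archimedean2 by blast
    then have "indicator {- real n<..real n} t = (1::real)" by (auto simp: indicator_def)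
    then show "k t = 0" using a[rule_format, of n] by (simp add: kn_def)
  qed
qed

lemma AE_zero_if_test_integrals_zero:
  assumes k: "locally_integrable k" and H: "\<And>\<phi>. test_fun \<phi> \<Longrightarrow> (\<integral>t. k t * \<phi> t \<partial>lborel) = 0"
  shows "AE t in lborel. k t = 0"
proof (rule AE_zero_if_interval_integrals_zero[OF k])
  fix a b :: real assume "ereal a \<le> ereal b"
  then have "a \<le> b" by simp
  then show "(LBINT t=a..b. k t) = 0" using interval_integral_from_test_functions[OF k, of 0 a b] H
    by simp
qed

lemma locally_integrable_diff: "locally_integrable f \<Longrightarrow> locally_integrable g
    \<Longrightarrow> locally_integrable (\<lambda>t. f t - g t)"
  unfolding locally_integrable_def set_integrable_def
  by (auto simp: algebra_simps intro: Bochner_Integration.integrable_diff[where f="\<lambda>x. indicator _ x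
      * f x" and g="\<lambda>x. indicator _ x * g x", simplified algebra_simps])

lemma interval_integral_diff_locally_integrable:
  fixes a b c :: real
  assumes "locally_integrable f" "locally_integrable g" "a \<le> b"
  shows "(LBINT t=a..b. f t - g t) = (LBINT t=a..b. f t) - (LBINT t=a..b. g t)"
proof -
  have "set_integrable lborel {a..b} f" "set_integrable lborel {a..b} g" using assms
    by (auto simp: locally_integrable_def)
  then show ?thesis using assms(3) by (simp add: interval_integral_Icc set_integral_diff)
qed

text \<open>Lemma of du Bois-Reymond: a locally integrable function with weak derivative zero is a.e.
  constant.  Every test function is a constant multiple of the unit bump plus a derivative.\<close>

lemma du_Bois_Reymond:
  assumes h: "locally_integrable h" and H: "\<And>\<phi>. test_fun \<phi> \<Longrightarrow> (\<integral>t. h t * deriv \<phi> t \<partial>lborel) = 0"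
  shows "\<exists>c. AE t in lborel. h t = c"
proof -
  define c where "c = (\<integral>t. h t * unit_bump t \<partial>lborel)"
  have HH: "(\<integral>t. h t * \<psi> t \<partial>lborel) = c * (\<integral>t. \<psi> t \<partial>lborel)" if \<psi>: "test_fun \<psi>" for \<psi>
  proof -
    define l where "l = (\<integral>t. \<psi> t \<partial>lborel)"
    have \<chi>: "test_fun (\<lambda>t. \<psi> t - l * unit_bump t)" by (rule test_fun_lincomb[OF \<psi> unit_bump_test])
    have "(\<integral>t. \<psi> t - l * unit_bump t \<partial>lborel) = l - l * (\<integral>t. unit_bump t \<partial>lborel)"
      using test_fun_integrable[OF \<psi>] test_fun_integrable[OF unit_bump_test] by (simp add: l_def)
    then have "(\<integral>t. \<psi> t - l * unit_bump t \<partial>lborel) = 0" by (simp add: unit_bump_integral)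
    then obtain \<Phi> where \<Phi>: "test_fun \<Phi>" "\<And>t. deriv \<Phi> t = \<psi> t - l * unit_bump t"
      using test_fun_primitive[OF \<chi>] by blast
    have "0 = (\<integral>t. h t * deriv \<Phi> t \<partial>lborel)" using H[OF \<Phi>(1)] by simp
    also have "\<dots> = (\<integral>t. h t * \<psi> t - l * (h t * unit_bump t) \<partial>lborel)"
      by (simp add: \<Phi>(2) algebra_simps)
    also have "\<dots> = (\<integral>t. h t * \<psi> t \<partial>lborel) - l * c"
      using locally_integrable_mult_test[OF h \<psi>] locally_integrable_mult_test[OF h unit_bump_test]
        by (simp add: c_def)
    finally show ?thesis by (simp add: l_def mult.commute)
  qed
  have "AE t in lborel. h t - c = 0"
  proof (rule AE_zero_if_interval_integrals_zero)
    show "locally_integrable (\<lambda>t. h t - c)"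
      by (rule locally_integrable_diff[OF h locally_integrable_const])
    fix a b :: real assume "ereal a \<le> ereal b"
    then have ab: "a \<le> b" by simp
    have "(LBINT t=a..b. h t - c) = (LBINT t=a..b. h t) - (LBINT t=a..b. c)"
      by (rule interval_integral_diff_locally_integrable[OF h locally_integrable_const ab])
    also have "\<dots> = 0" using interval_integral_from_test_functions[OF h HH ab] ab by simp
    finally show "(LBINT t=a..b. h t - c) = 0" .
  qed
  then show ?thesis by auto
qed

lemma weak_deriv_unique:
  assumes "weak_deriv f g1" "weak_deriv f g2" "locally_integrable g1" "locally_integrable g2"
  shows "AE t in lborel. g1 t = g2 t"
proof -
  have "AE t in lborel. g1 t - g2 t = 0"
  proof (rule AE_zero_if_test_integrals_zero)
    show "locally_integrable (\<lambda>t. g1 t - g2 t)" by (rule locally_integrable_diff) fact+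
    fix \<phi> assume "test_fun \<phi>"
    then have "integrable lborel (\<lambda>t. g1 t * \<phi> t)" "integrable lborel (\<lambda>t. g2 t * \<phi> t)"
      "(\<integral>t. g1 t * \<phi> t \<partial>lborel) = (\<integral>t. g2 t * \<phi> t \<partial>lborel)"
      using assms(1,2) unfolding weak_deriv_def by auto
    then show "(\<integral>t. (g1 t - g2 t) * \<phi> t \<partial>lborel) = 0" by (simp add: algebra_simps)
  qed
  then show ?thesis by auto
qed

lemma test_fun_deriv_measurable: "test_fun \<phi> \<Longrightarrow> deriv \<phi> \<in> borel_measurable lborel"
proof -
  assume "test_fun \<phi>"
  then have "smooth (deriv \<phi>)" by (simp add: test_fun_iff smooth_deriv)
  then have "deriv \<phi> \<in> borel_measurable borel"
    by (intro borel_measurable_continuous_onI smooth_cont)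
  then show ?thesis by simp
qed

lemma test_fun_measurable: "test_fun \<phi> \<Longrightarrow> \<phi> \<in> borel_measurable lborel"
proof -
  assume "test_fun \<phi>"
  then have "\<phi> \<in> borel_measurable borel"
    by (intro borel_measurable_continuous_onI smooth_cont) (simp add: test_fun_iff)
  then show ?thesis by simp
qed

lemma weak_deriv_AE_cong:
  assumes w: "weak_deriv f g" and m: "f' \<in> borel_measurable lborel" "g' \<in> borel_measurable lborel"
    and ae: "AE t in lborel. f t = f' t" "AE t in lborel. g t = g' t"
  shows "weak_deriv f' g'"
  unfolding weak_deriv_def
proof (intro allI impI)
  fix \<phi> assume \<phi>: "test_fun \<phi>"
  have i1: "integrable lborel (\<lambda>t. f t * deriv \<phi> t)" and i2: "integrable lborel (\<lambda>t. g t * \<phi> t)"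
    and e: "(\<integral>t. f t * deriv \<phi> t \<partial>lborel) = - (\<integral>t. g t * \<phi> t \<partial>lborel)"
    using w \<phi> unfolding weak_deriv_def by auto
  have m1: "(\<lambda>t. f' t * deriv \<phi> t) \<in> borel_measurable lborel"
    using m test_fun_deriv_measurable[OF \<phi>] by measurable
  have m2: "(\<lambda>t. g' t * \<phi> t) \<in> borel_measurable lborel" using m test_fun_measurable[OF \<phi>]
    by measurable
  have a1: "AE t in lborel. f t * deriv \<phi> t = f' t * deriv \<phi> t" using ae(1) by eventually_elim simp
  have a2: "AE t in lborel. g t * \<phi> t = g' t * \<phi> t" using ae(2) by eventually_elim simp
  have j1: "integrable lborel (\<lambda>t. f' t * deriv \<phi> t)" by (rule integrable_cong_AE_imp[OF i1 m1 a1])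
  have j2: "integrable lborel (\<lambda>t. g' t * \<phi> t)" by (rule integrable_cong_AE_imp[OF i2 m2 a2])
  have "(\<integral>t. f t * deriv \<phi> t \<partial>lborel) = (\<integral>t. f' t * deriv \<phi> t \<partial>lborel)"
    by (rule integral_cong_AE[OF borel_measurable_integrable[OF i1] m1 a1])
  moreover have "(\<integral>t. g t * \<phi> t \<partial>lborel) = (\<integral>t. g' t * \<phi> t \<partial>lborel)"
    by (rule integral_cong_AE[OF borel_measurable_integrable[OF i2] m2 a2])
  ultimately show "integrable lborel (\<lambda>t. f' t * deriv \<phi> t) \<and> integrable lborel (\<lambda>t. g' t * \<phi> t) \<and>
      (\<integral>t. f' t * deriv \<phi> t \<partial>lborel) = - (\<integral>t. g' t * \<phi> t \<partial>lborel)"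
    using j1 j2 e by simp
qed

section \<open>Primitives of locally integrable functions\<close>

lemma locally_integrable_set_integrable: "locally_integrable g \<Longrightarrow> set_integrable lborel {a..b} g"
  by (simp add: locally_integrable_def)

lemma locally_integrable_interval_integrable:
  fixes a b :: real
  assumes "locally_integrable g" shows "interval_lebesgue_integrable lborel a b g"
proof -
  have "set_integrable lborel {min a b..max a b} g" using assms
    by (simp add: locally_integrable_def)
  then have "set_integrable lborel {min a b<..<max a b} g" by (rule set_integrable_subset) auto
  then show ?thesis
    by (auto simp: interval_lebesgue_integrable_def min_def max_def split: if_splits)
qed

lemma interval_integral_sum_locally_integrable:
  fixes a b c :: real
  assumes "locally_integrable g"
  shows "(LBINT x=a..b. g x) + (LBINT x=b..c. g x) = (LBINT x=a..c. g x)"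
proof (rule interval_integral_sum)
  have "interval_lebesgue_integrable lborel (min a (min b c)) (max a (max b c)) g"
    by (rule locally_integrable_interval_integrable[OF assms])
  then show "interval_lebesgue_integrable lborel
      (min (ereal a) (min (ereal b) (ereal c))) (max (ereal a) (max (ereal b) (ereal c))) g"
    by (simp add: min_def max_def split: if_splits)
qed

lemma primitive_isCont:
  fixes cc tt :: real
  assumes g: "locally_integrable g"
  shows "isCont (\<lambda>t::real. LBINT s=cc..t. g s) tt"
proof -
  define T where "T = \<bar>cc\<bar> + \<bar>tt\<bar> + 1"
  have gi: "g integrable_on {-T..T}" using locally_integrable_set_integrable[OF g]
    by (rule set_borel_integral_eq_integral)
  have c1: "continuous_on {-T..T} (\<lambda>t. integral {-T..t} g)"
    by (rule indefinite_integral_continuous_1[OF gi])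
  have eq: "(LBINT s=cc..t. g s)
      = integral {-T..t} g - (LBINT s=-T..cc. g s)" if "t \<in> {-T..T}" for t
  proof -
    have "(LBINT s=-T..t. g s) = integral {-T..t} g"
      using that by (intro interval_integral_eq_integral locally_integrable_set_integrable[OF g])
          auto
    moreover have "(LBINT s=-T..cc. g s) + (LBINT s=cc..t. g s) = (LBINT s=-T..t. g s)"
      using interval_integral_sum_locally_integrable[OF g] by simp
    ultimately show ?thesis by simp
  qed
  have "continuous_on {-T..T} (\<lambda>t. LBINT s=cc..t. g s)"
    by (rule continuous_on_eq[OF continuous_on_diff[OF c1 continuous_on_const]]) (use eq in simp)
  moreover have "tt \<in> interior {-T..T}" by (auto simp: T_def interior_atLeastAtMost_real)
  ultimately show ?thesis using continuous_on_interior by blast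
qed

lemma primitive_0_isCont: "locally_integrable g \<Longrightarrow> isCont (\<lambda>t::real. LBINT s=0..t. g s) t"
  using primitive_isCont[where cc=0 and tt=t] by (simp add: zero_ereal_def)

lemma integrable_product_lborel:
  fixes a b :: "real \<Rightarrow> real"
  assumes a: "integrable lborel a" and b: "integrable lborel b"
  shows "integrable (lborel \<Otimes>\<^sub>M lborel) (\<lambda>(x,y). a x * b y)"
proof (rule lborel_pair.Fubini_integrable)
  have [measurable]: "a \<in> borel_measurable lborel" "b \<in> borel_measurable lborel" using a b by auto
  show "(\<lambda>(x,y). a x * b y) \<in> borel_measurable (lborel \<Otimes>\<^sub>M lborel)" by measurable
  have "(\<lambda>x. \<integral>y. norm (case (x, y) of (x, y) \<Rightarrow> a x * b y) \<partial>lborel)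
      = (\<lambda>x. \<bar>a x\<bar> * (\<integral>y. \<bar>b y\<bar> \<partial>lborel))"
    by (simp add: abs_mult)
  moreover have "integrable lborel (\<lambda>x. \<bar>a x\<bar> * (\<integral>y. \<bar>b y\<bar> \<partial>lborel))"
    using a by (intro integrable_mult_left integrable_abs)
  ultimately show "integrable lborel (\<lambda>x. \<integral>y. norm (case (x, y) of (x, y) \<Rightarrow> a x * b y) \<partial>lborel)"
    by simp
  show "AE x in lborel. integrable lborel (\<lambda>y. case (x, y) of (x, y) \<Rightarrow> a x * b y)"
    using b by (intro AE_I2) simp
qed

text \<open>Writing \<open>\<integral>\<^sub>0\<^sup>t g = \<integral> g(s) K(s, t) ds\<close> with a kernel \<open>K\<close> taking values in \<open>{-1, 0, 1}\<close>
  reduces integration by parts against a test function to Fubini's theorem.\<close>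

definition step_kernel :: "real \<Rightarrow> real \<Rightarrow> real" where
  "step_kernel s t = (if 0 < s \<and> s \<le> t then 1 else if t < s \<and> s \<le> 0 then -1 else 0)"

lemma step_kernel_measurable[measurable]:
  "(\<lambda>(s,t). step_kernel s t) \<in> borel_measurable (lborel \<Otimes>\<^sub>M lborel)"
  unfolding step_kernel_def by measurable

lemma primitive_as_kernel_integral:
  assumes g: "locally_integrable g"
  shows "(LBINT s=0..t. g s) = (\<integral>s. g s * step_kernel s t \<partial>lborel)"
proof (cases "0 \<le> t")
  case True
  have "(LBINT s=0..t. g s) = (\<integral>s. indicator {0<..t} s *\<^sub>R g s \<partial>lborel)"
    using True interval_integral_Ioc[of 0 t g]
      by (simp add: zero_ereal_def set_lebesgue_integral_def)
  also have "\<dots> = (\<integral>s. g s * step_kernel s t \<partial>lborel)"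
    using True by (intro Bochner_Integration.integral_cong) (auto simp: step_kernel_def
        indicator_def)
  finally show ?thesis .
next
  case False
  have "(LBINT s=0..t. g s) = - (LBINT s=t..0. g s)" by (rule interval_integral_endpoints_reverse)
  also have "\<dots> = - (\<integral>s. indicator {t<..0} s *\<^sub>R g s \<partial>lborel)"
    using False interval_integral_Ioc[of t 0 g]
      by (simp add: zero_ereal_def set_lebesgue_integral_def)
  also have "\<dots> = (\<integral>s. g s * step_kernel s t \<partial>lborel)"
    using False
      by (subst integral_minus[symmetric],
          intro Bochner_Integration.integral_cong) (auto simp: step_kernel_def indicator_def)
  finally show ?thesis .
qed

lemma test_fun_FTC:
  assumes \<phi>: "test_fun \<phi>" and "a \<le> b"
  shows "(LBINT t=a..b. deriv \<phi> t) = \<phi> b - \<phi> a"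
proof (rule interval_integral_FTC_finite)
  have sm: "smooth (deriv \<phi>)" "smooth \<phi>" using \<phi> by (auto simp: test_fun_iff smooth_deriv)
  show "continuous_on {min a b..max a b} (deriv \<phi>)" by (rule smooth_cont[OF sm(1)])
  fix x show "(\<phi> has_vector_derivative deriv \<phi> x) (at x within {min a b..max a b})"
    using smooth_has_deriv[OF sm(2)]
      by (simp add: has_real_derivative_iff_has_vector_derivative has_vector_derivative_at_within)
qed

lemma step_kernel_test_integral:
  assumes \<phi>: "test_fun \<phi>"
  shows "(\<integral>t. step_kernel s t * deriv \<phi> t \<partial>lborel) = - \<phi> s"
proof -
  obtain R where R0: "R \<ge> 0" and R: "\<And>t. R < \<bar>t\<bar> \<Longrightarrow> \<phi> t = 0" using test_fun_support[OF \<phi>] by blast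
  have dR: "deriv \<phi> t = 0" if "R < \<bar>t\<bar>" for t using deriv_outside_support[OF R that] .
  define U where "U = \<bar>s\<bar> + R + 1"
  have "U > R" "U \<ge> \<bar>s\<bar>" using R0 by (auto simp: U_def)
  have phiU: "\<phi> U = 0" "\<phi> (-U) = 0" using R \<open>U > R\<close> by auto
  show ?thesis
  proof (cases "0 < s")
    case True
    have "(\<integral>t. step_kernel s t * deriv \<phi> t \<partial>lborel)
        = (\<integral>t. indicator {s..U} t *\<^sub>R deriv \<phi> t \<partial>lborel)"
    proof (intro Bochner_Integration.integral_cong refl)
      fix t show "step_kernel s t * deriv \<phi> t = indicator {s..U} t *\<^sub>R deriv \<phi> t"
        using True dR[of t] \<open>U > R\<close> by (cases "t \<le> U") (auto simp: step_kernel_def indicator_def)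
    qed
    also have "\<dots> = (LBINT t=s..U. deriv \<phi> t)"
      using \<open>U \<ge> \<bar>s\<bar>\<close> by (simp add: interval_integral_Icc set_lebesgue_integral_def)
    also have "\<dots> = - \<phi> s" using test_fun_FTC[OF \<phi>, of s U] \<open>U \<ge> \<bar>s\<bar>\<close> phiU by simp
    finally show ?thesis .
  next
    case False
    have "(\<integral>t. step_kernel s t * deriv \<phi> t \<partial>lborel)
        = - (\<integral>t. indicator {-U..<s} t *\<^sub>R deriv \<phi> t \<partial>lborel)"
    proof (subst integral_minus[symmetric], intro Bochner_Integration.integral_cong refl)
      fix t show "step_kernel s t * deriv \<phi> t = - (indicator {-U..<s} t *\<^sub>R deriv \<phi> t)"
        using False dR[of t] \<open>U > R\<close> by (cases "- U \<le> t") (auto simp: step_kernel_def indicator_def)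
    qed
    also have "\<dots> = - (LBINT t=-U..s. deriv \<phi> t)"
      using \<open>U \<ge> \<bar>s\<bar>\<close> by (simp add: interval_integral_Ico set_lebesgue_integral_def)
    also have "\<dots> = - \<phi> s" using test_fun_FTC[OF \<phi>, of "-U" s] \<open>U \<ge> \<bar>s\<bar>\<close> phiU by simp
    finally show ?thesis .
  qed
qed

text \<open>The kernel representation of \<open>(\<integral>\<^sub>0\<^sup>t g) \<phi>'(t)\<close> is integrable on the plane: it is dominated by
  \<open>|g(s)| M\<close> on \<open>[-R, R]\<^sup>2\<close>, where \<open>[-R, R]\<close> contains the support of \<open>\<phi>\<close> and \<open>|\<phi>'| \<le> M\<close>.\<close>

lemma step_kernel_product_integrable:
  assumes g: "locally_integrable g" and \<phi>: "test_fun \<phi>"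
  shows "integrable (lborel \<Otimes>\<^sub>M lborel) (\<lambda>(s,t). g s * step_kernel s t * deriv \<phi> t)"
proof -
  obtain R where R: "\<And>t. R < \<bar>t\<bar> \<Longrightarrow> \<phi> t = 0" using test_fun_support[OF \<phi>] by blast
  have dR: "deriv \<phi> t = 0" if "R < \<bar>t\<bar>" for t using deriv_outside_support[OF R that] .
  have dc: "isCont (deriv \<phi>) t" for t using test_fun_isCont[OF test_fun_deriv[OF \<phi>]] .
  obtain M where M: "\<And>t. \<bar>t\<bar> \<le> R \<Longrightarrow> \<bar>deriv \<phi> t\<bar> \<le> M"
    using continuous_bounded_on_interval[OF dc] by blast
  have [measurable]: "g \<in> borel_measurable lborel" using g by (simp add: locally_integrable_def)
  have [measurable]: "deriv \<phi> \<in> borel_measurable lborel" using test_fun_deriv_measurable[OF \<phi>] .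
  let ?F = "\<lambda>s t. g s * step_kernel s t * deriv \<phi> t"
  let ?bound = "\<lambda>s t. norm (indicator {-R..R} s *\<^sub>R g s) * (indicator {-R..R} t *\<^sub>R M)"
  show ?thesis
  proof (rule Bochner_Integration.integrable_bound)
    have "integrable lborel (\<lambda>s. norm (indicator {-R..R} s *\<^sub>R g s))"
      using locally_integrable_set_integrable[OF g] unfolding set_integrable_def
      by (rule integrable_norm)
    moreover have "integrable lborel (\<lambda>t. indicator {-R..R} t *\<^sub>R M)"
      by (rule borel_integrable_compact) auto
    ultimately show "integrable (lborel \<Otimes>\<^sub>M lborel) (\<lambda>(s,t). ?bound s t)"
      by (rule integrable_product_lborel)
    have "(\<lambda>x. step_kernel (fst x) (snd x)) \<in> borel_measurable (lborel \<Otimes>\<^sub>M lborel)"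
      using step_kernel_measurable by (simp add: case_prod_beta')
    then show "(\<lambda>(s,t). ?F s t) \<in> borel_measurable (lborel \<Otimes>\<^sub>M lborel)"
      by (simp add: case_prod_beta')
    show "AE x in lborel \<Otimes>\<^sub>M lborel. norm (case x of (s, t) \<Rightarrow> ?F s t)
        \<le> norm (case x of (s, t) \<Rightarrow> ?bound s t)"
    proof (rule AE_I2, clarify)
      fix s t
      show "norm (?F s t) \<le> norm (?bound s t)"
      proof (cases "\<bar>t\<bar> \<le> R \<and> step_kernel s t \<noteq> 0")
        case True
        then have "\<bar>s\<bar> \<le> R" by (auto simp: step_kernel_def split: if_splits)
        moreover have "\<bar>step_kernel s t\<bar> \<le> 1" by (auto simp: step_kernel_def)
        moreover have "\<bar>deriv \<phi> t\<bar> \<le> M" using M True by blast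
        ultimately have "\<bar>g s\<bar> * \<bar>step_kernel s t\<bar> * \<bar>deriv \<phi> t\<bar> \<le> \<bar>g s\<bar> * 1 * M"
          by (intro mult_mono) auto
        then show ?thesis using True \<open>\<bar>s\<bar> \<le> R\<close> \<open>\<bar>deriv \<phi> t\<bar> \<le> M\<close>
          by (auto simp: abs_mult indicator_def)
      qed (use dR in auto)
    qed
  qed
qed

lemma primitive_integration_by_parts:
  assumes g: "locally_integrable g" and \<phi>: "test_fun \<phi>"
  shows "integrable lborel (\<lambda>t. (LBINT s=0..t. g s) * deriv \<phi> t)"
    and "(\<integral>t. (LBINT s=0..t. g s) * deriv \<phi> t \<partial>lborel) = - (\<integral>t. g t * \<phi> t \<partial>lborel)"
proof -
  obtain R where R: "\<And>t. R < \<bar>t\<bar> \<Longrightarrow> \<phi> t = 0" using test_fun_support[OF \<phi>] by blast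
  show "integrable lborel (\<lambda>t. (LBINT s=0..t. g s) * deriv \<phi> t)"
  proof (rule continuous_compact_support_integrable[of _ R])
    show "isCont (\<lambda>t. (LBINT s=0..t. g s) * deriv \<phi> t) t" for t
      by (intro continuous_intros primitive_0_isCont[OF g] test_fun_isCont[OF test_fun_deriv[OF \<phi>]])
  qed (simp add: deriv_outside_support[OF R])
  define F where "F s t = g s * step_kernel s t * deriv \<phi> t" for s t
  have "(\<integral>t. (LBINT s=0..t. g s) * deriv \<phi> t \<partial>lborel) = (\<integral>t. (\<integral>s. F s t \<partial>lborel) \<partial>lborel)"
    by (intro Bochner_Integration.integral_cong refl)
       (simp add: primitive_as_kernel_integral[OF g] F_def)
  also have "\<dots> = (\<integral>s. (\<integral>t. F s t \<partial>lborel) \<partial>lborel)"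
    by (rule lborel_pair.Fubini_integral) (use step_kernel_product_integrable[OF g \<phi>] in \<open>simp add:
        F_def\<close>)
  also have "\<dots> = (\<integral>s. g s * (- \<phi> s) \<partial>lborel)"
  proof (intro Bochner_Integration.integral_cong refl)
    fix s
    have "(\<integral>t. F s t \<partial>lborel) = g s * (\<integral>t. step_kernel s t * deriv \<phi> t \<partial>lborel)"
      by (simp add: F_def mult.assoc)
    then show "(\<integral>t. F s t \<partial>lborel) = g s * (- \<phi> s)" by (simp add: step_kernel_test_integral[OF \<phi>])
  qed
  finally show "(\<integral>t. (LBINT s=0..t. g s) * deriv \<phi> t \<partial>lborel) = - (\<integral>t. g t * \<phi> t \<partial>lborel)"
    by simp
qed

lemma continuous_imp_locally_integrable: "(\<And>t. isCont F t) \<Longrightarrow> locally_integrable F"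
proof -
  assume c: "\<And>t. isCont F t"
  have "F \<in> borel_measurable borel"
    by (rule borel_measurable_continuous_onI) (simp add: continuous_at_imp_continuous_on c)
  moreover have "integrable lborel (\<lambda>x. indicator {a..b} x *\<^sub>R F x)" for a b :: real
    by (rule borel_integrable_compact) (auto intro: continuous_at_imp_continuous_on c)
  ultimately show ?thesis by (simp add: locally_integrable_def set_integrable_def)
qed

lemma test_fun_deriv_integral_zero: "test_fun \<phi> \<Longrightarrow> (\<integral>t. deriv \<phi> t \<partial>lborel) = 0"
proof -
  assume \<phi>: "test_fun \<phi>"
  obtain R where R0: "R \<ge> 0" and R: "\<And>t. R < \<bar>t\<bar> \<Longrightarrow> \<phi> t = 0" using test_fun_support[OF \<phi>] by blast
  have "(\<integral>t. deriv \<phi> t \<partial>lborel) = (LBINT t=-(R+1)..R+1. deriv \<phi> t)"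
    using R0 by (intro interval_integral_eq_integral_support[symmetric,
        of R]) (auto intro: deriv_outside_support[OF R])
  also have "\<dots> = \<phi> (R+1) - \<phi> (-(R+1))" using test_fun_FTC[OF \<phi>] R0 by simp
  also have "\<dots> = 0" using R R0 by simp
  finally show ?thesis .
qed

lemma weak_deriv_primitive:
  assumes g: "locally_integrable g"
  shows "weak_deriv (\<lambda>t. c + (LBINT s=0..t. g s)) g"
  unfolding weak_deriv_def
proof (intro allI impI conjI)
  fix \<phi> assume \<phi>: "test_fun \<phi>"
  have i1: "integrable lborel (\<lambda>t. (LBINT s=0..t. g s) * deriv \<phi> t)"
    by (rule primitive_integration_by_parts(1)[OF g \<phi>])
  have i2: "integrable lborel (\<lambda>t. c * deriv \<phi> t)"
    using test_fun_integrable[OF test_fun_deriv[OF \<phi>]] by simp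
  show "integrable lborel (\<lambda>t. (c + (LBINT s=0..t. g s)) * deriv \<phi> t)"
    using Bochner_Integration.integrable_add[OF i2 i1] by (simp add: algebra_simps)
  show "integrable lborel (\<lambda>t. g t * \<phi> t)" by (rule locally_integrable_mult_test[OF g \<phi>])
  have "(\<integral>t. (c + (LBINT s=0..t. g s)) * deriv \<phi> t \<partial>lborel)
      = (\<integral>t. c * deriv \<phi> t \<partial>lborel) + (\<integral>t. (LBINT s=0..t. g s) * deriv \<phi> t \<partial>lborel)"
    using Bochner_Integration.integral_add[OF i2 i1] by (simp add: algebra_simps)
  also have "\<dots> = - (\<integral>t. g t * \<phi> t \<partial>lborel)"
    using primitive_integration_by_parts(2)[OF g \<phi>] test_fun_deriv_integral_zero[OF \<phi>] by simp
  finally show "(\<integral>t. (c + (LBINT s=0..t. g s)) * deriv \<phi> t \<partial>lborel) = - (\<integral>t. g t * \<phi> t \<partial>lborel)" .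
qed

lemma weak_deriv_representative:
  assumes w: "weak_deriv f g" and f: "locally_integrable f" and g: "locally_integrable g"
  shows "\<exists>c. AE t in lborel. f t = c + (LBINT s=0..t. g s)"
proof -
  let ?G = "\<lambda>t::real. LBINT s=0..t. g s"
  have Gl: "locally_integrable ?G"
    by (rule continuous_imp_locally_integrable[OF primitive_0_isCont[OF g]])
  have "\<exists>c. AE t in lborel. f t - ?G t = c"
  proof (rule du_Bois_Reymond)
    show "locally_integrable (\<lambda>t. f t - ?G t)" by (rule locally_integrable_diff[OF f Gl])
    fix \<phi> assume \<phi>: "test_fun \<phi>"
    have i1: "integrable lborel (\<lambda>t. f t * deriv \<phi> t)"
        and e1: "(\<integral>t. f t * deriv \<phi> t \<partial>lborel) = - (\<integral>t. g t * \<phi> t \<partial>lborel)"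
      using w \<phi> unfolding weak_deriv_def by auto
    have i2: "integrable lborel (\<lambda>t. ?G t * deriv \<phi> t)"
      by (rule primitive_integration_by_parts(1)[OF g \<phi>])
    have "(\<integral>t. (f t - ?G t) * deriv \<phi> t \<partial>lborel)
        = (\<integral>t. f t * deriv \<phi> t \<partial>lborel) - (\<integral>t. ?G t * deriv \<phi> t \<partial>lborel)"
      using Bochner_Integration.integral_diff[OF i1 i2] by (simp add: algebra_simps)
    also have "\<dots> = 0" using e1 primitive_integration_by_parts(2)[OF g \<phi>] by simp
    finally show "(\<integral>t. (f t - ?G t) * deriv \<phi> t \<partial>lborel) = 0" .
  qed
  then obtain c where "AE t in lborel. f t - ?G t = c" by blast
  then have "AE t in lborel. f t = c + ?G t" by eventually_elim simp
  then show ?thesis by blast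
qed

lemma locally_integrable_mult_continuous:
  assumes r: "locally_integrable r" and c: "\<And>t. isCont f t"
  shows "locally_integrable (\<lambda>t. f t * r t)"
proof -
  have "f \<in> borel_measurable borel"
    by (rule borel_measurable_continuous_onI) (simp add: continuous_at_imp_continuous_on c)
  then have fm: "f \<in> borel_measurable lborel" by simp
  have rm: "r \<in> borel_measurable lborel" using r by (simp add: locally_integrable_def)
  have "set_integrable lborel {a..b} (\<lambda>t. f t * r t)" for a b
  proof -
    obtain M where M: "\<And>t. \<bar>t\<bar> \<le> \<bar>a\<bar> + \<bar>b\<bar> \<Longrightarrow> \<bar>f t\<bar> \<le> M" using continuous_bounded_on_interval[OF c]
      by blast
    show ?thesis unfolding set_integrable_def
    proof (rule Bochner_Integration.integrable_bound)
      show "integrable lborel (\<lambda>t. M * norm (indicat_real {a..b} t *\<^sub>R r t))"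
        using locally_integrable_set_integrable[OF r] unfolding set_integrable_def
          by (intro integrable_mult_right integrable_norm)
      show "(\<lambda>t. indicat_real {a..b} t *\<^sub>R (f t * r t)) \<in> borel_measurable lborel" using fm rm
        by measurable
      show "AE x in lborel. norm (indicat_real {a..b} x *\<^sub>R (f x * r x))
          \<le> norm (M * norm (indicat_real {a..b} x *\<^sub>R r x))"
      proof (rule AE_I2)
        fix x show "norm (indicat_real {a..b} x *\<^sub>R (f x * r x))
            \<le> norm (M * norm (indicat_real {a..b} x *\<^sub>R r x))"
        proof (cases "x \<in> {a..b}")
          case True
          then have "\<bar>f x\<bar> \<le> M" by (intro M) auto
          then show ?thesis using True by (auto simp: abs_mult intro: mult_right_mono)
        qed simp
      qed
    qed
  qed
  then show ?thesis using fm rm by (simp add: locally_integrable_def)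
qed

lemma locally_integrable_abs: "locally_integrable r \<Longrightarrow> locally_integrable (\<lambda>t. \<bar>r t\<bar>)"
  unfolding locally_integrable_def set_integrable_def
proof (intro conjI allI; elim conjE)
  fix a b :: real
  assume "\<forall>a b. integrable lborel (\<lambda>x. indicat_real {a..b} x *\<^sub>R r x)"
  then have "integrable lborel (\<lambda>x. \<bar>indicat_real {a..b} x *\<^sub>R r x\<bar>)" by (intro integrable_abs) auto
  then show "integrable lborel (\<lambda>x. indicat_real {a..b} x *\<^sub>R \<bar>r x\<bar>)" by (simp add: abs_mult)
qed auto

section \<open>Chain rule for absolutely continuous functions\<close>

text \<open>A function whose increments over short subintervals of \<open>[a, b]\<close> are dominated by
  \<open>\<epsilon>\<close> times the increments of a fixed function \<open>F\<close>, for every \<open>\<epsilon> > 0\<close>, takes equal values at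
  \<open>a\<close> and \<open>b\<close>: split \<open>[a, b]\<close> into short pieces and telescope.\<close>

lemma equal_if_increments_dominated:
  fixes D F :: "real \<Rightarrow> real" and a b :: real
  assumes ab: "a \<le> b" and F_ab: "F a \<le> F b"
    and small: "\<And>\<epsilon>. \<epsilon> > 0 \<Longrightarrow> \<exists>\<delta>>0. \<forall>s t. a \<le> s \<and> s \<le> t \<and> t \<le> b \<and> t - s < \<delta> \<longrightarrow>
                   \<bar>D t - D s\<bar> \<le> \<epsilon> * (F t - F s)"
  shows "D b = D a"
proof -
  define A where "A = F b - F a"
  have A0: "A \<ge> 0" using F_ab by (simp add: A_def)
  have "\<bar>D b - D a\<bar> \<le> 0 + e" if e: "e > 0" for e
  proof -
    obtain \<delta> where \<delta>: "\<delta> > 0" and K: "\<And>s t. a \<le> s \<and> s \<le> t \<and> t \<le> b \<and> t - s < \<delta> \<Longrightarrow>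
        \<bar>D t - D s\<bar> \<le> e / (A + 1) * (F t - F s)"
      using small[of "e / (A + 1)"] e A0 by auto
    obtain n :: nat where n: "(b - a) / \<delta> \<le> n" using real_arch_simple by blast
    define N where "N = Suc n"
    have N: "(b - a) / N < \<delta>"
    proof -
      have "b - a < \<delta> * N" using n \<delta> by (simp add: N_def field_simps)
      then show ?thesis by (simp add: N_def field_simps)
    qed
    define T where "T i = a + real i * (b - a) / N" for i
    have T0: "T 0 = a" and TN: "T N = b" by (auto simp: T_def N_def)
    have Tstep: "T (Suc i) - T i = (b - a) / N" for i
      by (simp add: T_def add_divide_distrib[symmetric] algebra_simps)
    have Tmono: "T i \<le> T (Suc i)" for i
    proof -
      have "(b - a) / N \<ge> 0" using ab by (simp add: N_def)
      then show ?thesis using Tstep[of i] by linarith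
    qed
    have Tbound: "a \<le> T i \<and> T i \<le> b" if "i \<le> N" for i
    proof -
      have "real i * (b - a) / N \<le> real N * (b - a) / N" using that ab
        by (intro divide_right_mono mult_right_mono) auto
      then show ?thesis using ab by (auto simp: T_def N_def)
    qed
    have "\<bar>D b - D a\<bar> = \<bar>\<Sum>i<N. D (T (Suc i)) - D (T i)\<bar>"
      using sum_lessThan_telescope[of "\<lambda>i. D (T i)" N] T0 TN by simp
    also have "\<dots> \<le> (\<Sum>i<N. \<bar>D (T (Suc i)) - D (T i)\<bar>)" by (rule sum_abs)
    also have "\<dots> \<le> (\<Sum>i<N. e / (A + 1) * (F (T (Suc i)) - F (T i)))"
      using Tbound Tmono Tstep N by (intro sum_mono K) (auto simp: Suc_le_eq)
    also have "\<dots> = e / (A + 1) * (\<Sum>i<N. F (T (Suc i)) - F (T i))"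
      by (rule sum_distrib_left[symmetric])
    also have "\<dots> = e / (A + 1) * A"
      using sum_lessThan_telescope[of "\<lambda>i. F (T i)" N] T0 TN by (simp add: A_def)
    also have "\<dots> \<le> e" using A0 e by (simp add: field_simps)
    finally show ?thesis by simp
  qed
  then have "\<bar>D b - D a\<bar> \<le> 0" by (rule field_le_epsilon)
  then show ?thesis by simp
qed

lemma MVT_between:
  fixes f f' :: "real \<Rightarrow> real" and a b :: real
  assumes deriv: "\<And>z. min a b \<le> z \<Longrightarrow> z \<le> max a b \<Longrightarrow> (f has_real_derivative f' z) (at z)"
  obtains \<xi> where "min a b \<le> \<xi>" "\<xi> \<le> max a b" "f b - f a = f' \<xi> * (b - a)"
proof -
  consider "a = b" | "a < b" | "b < a" by linarith
  then show thesis
  proof cases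
    case 1 then show thesis using that[of a] by simp
  next
    case 2
    have "\<exists>z>a. z < b \<and> f b - f a = (b - a) * f' z"
      by (rule MVT2[OF 2]) (use deriv 2 in auto)
    then obtain z where "a < z" "z < b" "f b - f a = (b - a) * f' z" by blast
    then show thesis using that[of z] 2 by (simp add: mult.commute)
  next
    case 3
    have "\<exists>z>b. z < a \<and> f a - f b = (a - b) * f' z"
      by (rule MVT2[OF 3]) (use deriv 3 in auto)
    then obtain z where "b < z" "z < a" "f a - f b = (a - b) * f' z" by blast
    then show thesis using that[of z] 3 by (simp add: algebra_simps)
  qed
qed

text \<open>Chain rule for an absolutely continuous function \<open>Q\<close> (the primitive of a locally
  integrable \<open>r\<close>) composed with a \<open>C\<^sup>1\<close> function \<open>G\<close> defined on an interval \<open>[c, d]\<close> containing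
  the range of \<open>Q\<close>: \<open>G \<circ> Q\<close> is the primitive of \<open>G' (Q t) * r t\<close>.  Since \<open>Q\<close> need not be
  differentiable, this is proved directly: by the mean value theorem and uniform continuity
  of \<open>G'\<close> and \<open>Q\<close>, the defect \<open>G (Q t) - \<integral>\<^sub>a\<^sup>t G' (Q) r\<close> has increments dominated by \<open>\<epsilon> \<integral> |r|\<close>.\<close>

context
  fixes Q r G G' :: "real \<Rightarrow> real" and c d :: real
  assumes r: "locally_integrable r"
    and Q_increment: "\<And>u v. Q v - Q u = (LBINT t=u..v. r t)"
    and Q_cont: "\<And>t. isCont Q t"
    and Q_range: "\<And>t. Q t \<in> {c..d}"
    and G_deriv: "\<And>z. z \<in> {c..d} \<Longrightarrow> (G has_real_derivative G' z) (at z)"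
    and G'_cont: "continuous_on {c..d} G'"
begin

lemma chain_rule_G'_Q_isCont: "isCont (\<lambda>t. G' (Q t)) t"
proof -
  have "continuous_on UNIV Q" by (intro continuous_at_imp_continuous_on ballI Q_cont)
  then have "continuous_on UNIV (\<lambda>t. G' (Q t))"
    by (rule continuous_on_compose2[OF G'_cont]) (use Q_range in auto)
  then show ?thesis by (simp add: continuous_on_eq_continuous_at)
qed

lemma chain_rule_integrand: "locally_integrable (\<lambda>t. G' (Q t) * r t)"
  by (rule locally_integrable_mult_continuous[OF r chain_rule_G'_Q_isCont])

text \<open>Key estimate: on short subintervals \<open>[s, t]\<close> of \<open>[a, b]\<close> the increment of the
  defect is \<open>\<integral>\<^sub>s\<^sup>t (G' \<xi> - G' (Q \<tau>)) r \<tau> d\<tau>\<close> with \<open>\<xi>\<close> from the mean value theorem,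
      hence at most \<open>\<epsilon> \<integral>\<^sub>s\<^sup>t |r|\<close>.\<close>

lemma chain_rule_defect_increments:
  assumes "\<epsilon> > 0"
  shows "\<exists>\<delta>>0. \<forall>s t. a \<le> s \<and> s \<le> t \<and> t \<le> b \<and> t - s < \<delta> \<longrightarrow>
    \<bar>(G (Q t) - (LBINT \<tau>=a..t. G' (Q \<tau>) * r \<tau>)) - (G (Q s) - (LBINT \<tau>=a..s. G' (Q \<tau>) * r \<tau>))\<bar>
      \<le> \<epsilon> * ((LBINT \<tau>=a..t. \<bar>r \<tau>\<bar>) - (LBINT \<tau>=a..s. \<bar>r \<tau>\<bar>))"
proof -
  let ?h = "\<lambda>t. G' (Q t) * r t"
  have "uniformly_continuous_on {c..d} G'"
    by (rule compact_uniformly_continuous[OF G'_cont]) auto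
  then obtain \<eta> where \<eta>: "\<eta> > 0" and G'_uc: "\<And>z z'. z \<in> {c..d} \<Longrightarrow> z' \<in> {c..d} \<Longrightarrow>
      dist z' z < \<eta> \<Longrightarrow> dist (G' z') (G' z) < \<epsilon>"
    unfolding uniformly_continuous_on_def using \<open>\<epsilon> > 0\<close> by metis
  have "uniformly_continuous_on {a..b} Q"
    using Q_cont by (intro compact_uniformly_continuous continuous_at_imp_continuous_on) auto
  then obtain \<delta> where \<delta>: "\<delta> > 0" and Q_uc: "\<And>z z'. z \<in> {a..b} \<Longrightarrow> z' \<in> {a..b} \<Longrightarrow>
      dist z' z < \<delta> \<Longrightarrow> dist (Q z') (Q z) < \<eta>"
    unfolding uniformly_continuous_on_def using \<eta> by metis
  show ?thesis
  proof (intro exI[of _ \<delta>] conjI allI impI \<delta>)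
    fix s t assume st: "a \<le> s \<and> s \<le> t \<and> t \<le> b \<and> t - s < \<delta>"
    have between_range: "z \<in> {c..d}" if "min (Q s) (Q t) \<le> z" "z \<le> max (Q s) (Q t)" for z
      using that Q_range[of s] Q_range[of t] by auto
    obtain \<xi> where \<xi>: "min (Q s) (Q t) \<le> \<xi>" "\<xi> \<le> max (Q s) (Q t)"
      and mvt: "G (Q t) - G (Q s) = G' \<xi> * (Q t - Q s)"
      using MVT_between[of "Q s" "Q t" G G'] G_deriv between_range by blast
    have sint: "set_integrable lborel {s..t} f" if "locally_integrable f" for f
      using that by (simp add: locally_integrable_def)
    have h_inc: "(LBINT \<tau>=a..t. ?h \<tau>) - (LBINT \<tau>=a..s. ?h \<tau>) = (LINT \<tau>:{s..t}|lborel. ?h \<tau>)"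
      using interval_integral_sum_locally_integrable[OF chain_rule_integrand, of a s t] st
      by (simp add: interval_integral_Icc)
    have absr_inc: "(LBINT \<tau>=a..t. \<bar>r \<tau>\<bar>) - (LBINT \<tau>=a..s. \<bar>r \<tau>\<bar>) = (LINT \<tau>:{s..t}|lborel. \<bar>r \<tau>\<bar>)"
      using interval_integral_sum_locally_integrable[OF locally_integrable_abs[OF r], of a s t] st
      by (simp add: interval_integral_Icc)
    have Q_inc: "Q t - Q s = (LINT \<tau>:{s..t}|lborel. r \<tau>)"
      using Q_increment[of t s] st by (simp add: interval_integral_Icc)
    have integrable: "set_integrable lborel {s..t} (\<lambda>\<tau>. (G' \<xi> - G' (Q \<tau>)) * r \<tau>)"
      by (rule sint, rule locally_integrable_mult_continuous[OF r])
         (intro continuous_intros chain_rule_G'_Q_isCont)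
    have defect: "(G (Q t) - (LBINT \<tau>=a..t. ?h \<tau>)) - (G (Q s) - (LBINT \<tau>=a..s. ?h \<tau>))
        = (LINT \<tau>:{s..t}|lborel. (G' \<xi> - G' (Q \<tau>)) * r \<tau>)"
      using mvt h_inc Q_inc sint[OF r] sint[OF chain_rule_integrand]
      by (simp add: algebra_simps set_integral_diff(2) set_integral_mult_right)
    have pointwise: "norm ((G' \<xi> - G' (Q \<tau>)) * r \<tau>) \<le> \<epsilon> * \<bar>r \<tau>\<bar>" if \<tau>: "\<tau> \<in> {s..t}" for \<tau>
    proof -
      have "dist (Q \<tau>) (Q s) < \<eta>" "dist (Q \<tau>) (Q t) < \<eta>"
        using st \<tau> by (intro Q_uc; auto simp: dist_real_def)+
      then have "dist (Q \<tau>) \<xi> < \<eta>" using \<xi> by (auto simp: dist_real_def)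
      then have "dist (G' (Q \<tau>)) (G' \<xi>) < \<epsilon>"
        using between_range[OF \<xi>] Q_range[of \<tau>] by (intro G'_uc) auto
      then show ?thesis by (simp add: dist_real_def abs_minus_commute abs_mult mult_right_mono)
    qed
    have "\<bar>(LINT \<tau>:{s..t}|lborel. (G' \<xi> - G' (Q \<tau>)) * r \<tau>)\<bar>
        \<le> (LINT \<tau>:{s..t}|lborel. norm ((G' \<xi> - G' (Q \<tau>)) * r \<tau>))"
      using set_integral_norm_bound[OF integrable] by simp
    also have "\<dots> \<le> (LINT \<tau>:{s..t}|lborel. \<epsilon> * \<bar>r \<tau>\<bar>)"
    proof (rule set_integral_mono[OF _ _ pointwise])
      show "set_integrable lborel {s..t} (\<lambda>\<tau>. norm ((G' \<xi> - G' (Q \<tau>)) * r \<tau>))"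
        using integrable_abs[OF integrable[unfolded set_integrable_def]]
        unfolding set_integrable_def by (simp add: abs_mult)
      show "set_integrable lborel {s..t} (\<lambda>\<tau>. \<epsilon> * \<bar>r \<tau>\<bar>)"
        using sint[OF locally_integrable_abs[OF r]] by simp
    qed
    finally show "\<bar>(G (Q t) - (LBINT \<tau>=a..t. ?h \<tau>)) - (G (Q s) - (LBINT \<tau>=a..s. ?h \<tau>))\<bar>
        \<le> \<epsilon> * ((LBINT \<tau>=a..t. \<bar>r \<tau>\<bar>) - (LBINT \<tau>=a..s. \<bar>r \<tau>\<bar>))"
      unfolding defect absr_inc by simp
  qed
qed

theorem chain_rule_absolutely_continuous:
  assumes ab: "a \<le> b"
  shows "G (Q b) - G (Q a) = (LBINT t=a..b. G' (Q t) * r t)"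
proof -
  have "(\<lambda>t. G (Q t) - (LBINT \<tau>=a..t. G' (Q \<tau>) * r \<tau>)) b
      = (\<lambda>t. G (Q t) - (LBINT \<tau>=a..t. G' (Q \<tau>) * r \<tau>)) a"
  proof (rule equal_if_increments_dominated[OF ab _ chain_rule_defect_increments])
    show "(LBINT \<tau>=a..a. \<bar>r \<tau>\<bar>) \<le> (LBINT \<tau>=a..b. \<bar>r \<tau>\<bar>)"
      using ab by (simp add: interval_integral_Icc set_lebesgue_integral_def)
  qed
  then show ?thesis by simp
qed

end

section \<open>Changes of variables\<close>

text \<open>Translations between the Lebesgue integral on \<open>lborel\<close> and the (absolute)
  Henstock--Kurzweil integral, in which the change of variables theorem is available.\<close>

lemma set_integrable_imp_absolutely_integrable:
  fixes g :: "real \<Rightarrow> real"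
  shows "set_integrable lborel A g \<Longrightarrow> g absolutely_integrable_on A"
  unfolding set_integrable_def
  by (subst integrable_completion) (auto dest: borel_measurable_integrable)

lemma absolutely_integrable_imp_set_integrable:
  fixes g :: "real \<Rightarrow> real"
  assumes "g absolutely_integrable_on A" "g \<in> borel_measurable borel" "A \<in> sets borel"
  shows "set_integrable lborel A g"
  using assms unfolding set_integrable_def
  by (subst integrable_completion[symmetric]) auto

lemma continuous_imp_borel_measurable: "(\<And>t. isCont (g::real\<Rightarrow>real) t) \<Longrightarrow> g \<in> borel_measurable borel"
  by (rule borel_measurable_continuous_onI) (simp add: continuous_at_imp_continuous_on)

lemma continuous_AE_bound:
  fixes f :: "real \<Rightarrow> real"
  assumes c: "\<And>t. isCont f t" and ae: "AE t in lborel. \<bar>f t\<bar> \<le> qc"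
  shows "\<bar>f t0\<bar> \<le> qc"
proof (rule ccontr)
  assume "\<not> \<bar>f t0\<bar> \<le> qc"
  then have e: "\<bar>f t0\<bar> - qc > 0" by simp
  have "f \<midarrow>t0\<rightarrow> f t0" using c[of t0] by (simp add: isCont_def)
  from LIM_D[OF this e] obtain d where d: "d > 0"
      and D: "\<And>t. t \<noteq> t0 \<and> norm (t - t0) < d \<Longrightarrow> norm (f t - f t0) < \<bar>f t0\<bar> - qc"
    by blast
  have "AE t in lborel. t \<notin> {t0<..<t0+d}"
    using ae
  proof eventually_elim
    fix t assume "\<bar>f t\<bar> \<le> qc"
    show "t \<notin> {t0<..<t0+d}"
    proof
      assume "t \<in> {t0<..<t0+d}"
      then have "norm (f t - f t0) < \<bar>f t0\<bar> - qc" by (intro D) auto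
      with \<open>\<bar>f t\<bar> \<le> qc\<close> show False by auto
    qed
  qed
  then have "emeasure lborel {t0<..<t0+d} = 0"
    by (subst (asm) AE_iff_measurable[of "{t0<..<t0+d}" lborel]) auto
  then show False using d by simp
qed

lemma positive_deriv_mono:
  fixes y y' :: "real \<Rightarrow> real"
  assumes yd: "\<And>s. (y has_real_derivative y' s) (at s)" and ypos: "\<And>s. y' s > 0" and ab: "a \<le> b"
  shows "y a \<le> y b"
  by (rule DERIV_nonneg_imp_nondecreasing[OF ab]) (use yd ypos less_imp_le in blast)

lemma interval_integral_substitution:
  fixes y x y' f :: "real \<Rightarrow> real" and a b :: real
  assumes f: "locally_integrable f"
    and yd: "\<And>s. (y has_real_derivative y' s) (at s)" and ypos: "\<And>s. y' s > 0"
        and yc: "\<And>s. isCont y' s"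
    and xy: "\<And>s. x (y s) = s" and yx: "\<And>t. y (x t) = t" and xmono: "\<And>t1 t2. t1 \<le> t2 \<Longrightarrow> x t1 \<le> x t2"
    and ab: "a \<le> b"
  shows "(LBINT t=y a..y b. f t) = (LBINT s=a..b. f (y s) * y' s)"
proof -
  have ymono: "y a \<le> y b" by (rule positive_deriv_mono[OF yd ypos ab])
  have img: "y ` {a..b} = {y a..y b}"
  proof
    show "y ` {a..b} \<subseteq> {y a..y b}"
    proof
      fix w assume "w \<in> y ` {a..b}"
      then obtain s where s: "s \<in> {a..b}" "w = y s" by blast
      have "y a \<le> y s" "y s \<le> y b" using s by (auto intro!: positive_deriv_mono[OF yd ypos])
      then show "w \<in> {y a..y b}" using s by auto
    qed
    show "{y a..y b} \<subseteq> y ` {a..b}"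
    proof
      fix w assume w: "w \<in> {y a..y b}"
      have "x (y a) \<le> x w" "x w \<le> x (y b)" using w xmono by auto
      then have "x w \<in> {a..b}" by (simp add: xy)
      then show "w \<in> y ` {a..b}" using yx[of w] by (metis image_eqI)
    qed
  qed
  have inj: "inj_on y {a..b}" by (metis inj_on_inverseI xy)
  have der: "(y has_field_derivative y' s) (at s within {a..b})" for s
    using yd has_field_derivative_at_within by blast
  have fi: "set_integrable lborel {y a..y b} f" by (rule locally_integrable_set_integrable[OF f])
  define B where "B = integral {y a..y b} f"
  have "f absolutely_integrable_on (y ` {a..b}) \<and> integral (y ` {a..b}) f = B"
    unfolding img B_def using set_integrable_imp_absolutely_integrable[OF fi] by simp
  then have L: "(\<lambda>s. \<bar>y' s\<bar> * f (y s)) absolutely_integrable_on {a..b}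
      \<and> integral {a..b} (\<lambda>s. \<bar>y' s\<bar> * f (y s)) = B"
    using has_absolute_integral_change_of_variables_1'[OF _ der inj, of f B] by simp
  have ycont: "isCont y s" for s using yd DERIV_isCont by blast
  have fm: "f \<in> borel_measurable borel" using f by (simp add: locally_integrable_def)
  have m: "(\<lambda>s. \<bar>y' s\<bar> * f (y s)) \<in> borel_measurable borel"
    using fm continuous_imp_borel_measurable[OF yc] continuous_imp_borel_measurable[OF ycont]
      by measurable
  have si: "set_integrable lborel {a..b} (\<lambda>s. \<bar>y' s\<bar> * f (y s))"
    by (rule absolutely_integrable_imp_set_integrable) (use L m in auto)
  have "(LBINT s=a..b. f (y s) * y' s) = (LBINT s=a..b. \<bar>y' s\<bar> * f (y s))"
    using ypos by (simp add: abs_of_pos mult.commute)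
  also have "\<dots> = integral {a..b} (\<lambda>s. \<bar>y' s\<bar> * f (y s))"
    by (rule interval_integral_eq_integral[OF ab si])
  also have "\<dots> = B" using L by simp
  also have "\<dots> = (LBINT t=y a..y b. f t)" unfolding B_def
    by (rule interval_integral_eq_integral[symmetric, OF ymono fi])
  finally show ?thesis by simp
qed

lemma integral_change_of_variables:
  fixes x X' f :: "real \<Rightarrow> real"
  assumes xd: "\<And>t. (x has_real_derivative X' t) (at t)" and Xpos: "\<And>t. X' t > 0"
    and inj: "inj x" and surj: "surj x"
    and fm: "f \<in> borel_measurable borel" and gm: "(\<lambda>t. X' t * f (x t)) \<in> borel_measurable borel"
  shows "integrable lborel (\<lambda>t. X' t * f (x t)) \<longleftrightarrow> integrable lborel f"
    and "integrable lborel f \<Longrightarrow> (\<integral>t. f t \<partial>lborel) = (\<integral>t. X' t * f (x t) \<partial>lborel)"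
proof -
  have der: "(x has_field_derivative X' s) (at s within UNIV)" for s using xd by simp
  have E: "(\<lambda>t. \<bar>X' t\<bar> * f (x t)) absolutely_integrable_on UNIV
      \<and> integral UNIV (\<lambda>t. \<bar>X' t\<bar> * f (x t)) = B
     \<longleftrightarrow> f absolutely_integrable_on UNIV \<and> integral UNIV f = B" for B
    using has_absolute_integral_change_of_variables_1'[OF _ der inj, of f B] surj by simp
  have ab: "\<bar>X' t\<bar> = X' t" for t using Xpos[of t] by simp
  have ai: "g absolutely_integrable_on UNIV \<longleftrightarrow> integrable lborel g" if "g \<in> borel_measurable borel"
      for g :: "real \<Rightarrow> real"
    using that unfolding set_integrable_def by (simp add: integrable_completion)
  have ie: "integral UNIV g = (\<integral>t. g t \<partial>lborel)" if "integrable lborel g" for g :: "real \<Rightarrow> real"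
  proof -
    have "set_integrable lborel UNIV g" using that by (simp add: set_integrable_def)
    from set_borel_integral_eq_integral(2)[OF this] show ?thesis
      by (simp add: set_lebesgue_integral_def)
  qed
  have E': "(\<lambda>t. X' t * f (x t)) absolutely_integrable_on UNIV
      \<and> integral UNIV (\<lambda>t. X' t * f (x t)) = B
     \<longleftrightarrow> f absolutely_integrable_on UNIV \<and> integral UNIV f = B" for B
    using E[of B] by (simp only: ab)
  show 1: "integrable lborel (\<lambda>t. X' t * f (x t)) \<longleftrightarrow> integrable lborel f"
  proof
    assume "integrable lborel (\<lambda>t. X' t * f (x t))"
    then have "(\<lambda>t. X' t * f (x t)) absolutely_integrable_on UNIV" using ai[OF gm] by blast
    then have "f absolutely_integrable_on UNIV" using E'[of "integral UNIV (\<lambda>t. X' t * f (x t))"]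
      by blast
    then show "integrable lborel f" using ai[OF fm] by blast
  next
    assume "integrable lborel f"
    then have "f absolutely_integrable_on UNIV" using ai[OF fm] by blast
    then have "(\<lambda>t. X' t * f (x t)) absolutely_integrable_on UNIV" using E'[of "integral UNIV f"]
      by blast
    then show "integrable lborel (\<lambda>t. X' t * f (x t))" using ai[OF gm] by blast
  qed
  assume fi: "integrable lborel f"
  then have gi: "integrable lborel (\<lambda>t. X' t * f (x t))" using 1 by simp
  have "integral UNIV (\<lambda>t. X' t * f (x t)) = integral UNIV f"
    using E'[of "integral UNIV f"] ai[OF fm] fi by blast
  then show "(\<integral>t. f t \<partial>lborel) = (\<integral>t. X' t * f (x t) \<partial>lborel)" using ie[OF fi] ie[OF gi] by simp
qed

text \<open>Composing with the right inverse \<open>y\<close> of a differentiable map \<open>x\<close> preserves almost-everywhere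
  equality, because \<open>x\<close> maps null sets to null sets.\<close>

lemma AE_compose_right_inverse:
  fixes x y p P :: "real \<Rightarrow> real"
  assumes xd: "\<And>t. x differentiable (at t)" and xy: "\<And>s. x (y s) = s"
    and ae: "AE t in lborel. p t = P t"
  shows "AE s in lborel. p (y s) = P (y s)"
proof -
  obtain N where N0: "{t \<in> space lborel. \<not> p t = P t} \<subseteq> N" "emeasure lborel N = 0" "N \<in> sets lborel"
    by (rule AE_E[OF ae])
  have N: "N \<in> null_sets lborel" "{t \<in> space lborel. \<not> p t = P t} \<subseteq> N" using N0
    by (auto intro: null_setsI)
  have "N \<in> null_sets lebesgue" using N(1) null_sets_completionI by blast
  then have "negligible N" by (simp add: negligible_iff_null_sets)
  moreover have "x differentiable_on N" using xd
    by (simp add: differentiable_at_imp_differentiable_on)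
  ultimately have "negligible (x ` N)" by (intro negligible_differentiable_image_negligible) auto
  then have nl: "x ` N \<in> null_sets lebesgue" by (simp add: negligible_iff_null_sets)
  have "AE s in lebesgue. p (y s) = P (y s)"
  proof (rule AE_I'[OF nl])
    show "{s \<in> space lebesgue. \<not> p (y s) = P (y s)} \<subseteq> x ` N"
    proof
      fix s assume "s \<in> {s \<in> space lebesgue. \<not> p (y s) = P (y s)}"
      then have "y s \<in> N" using N(2) by auto
      then show "s \<in> x ` N" using xy[of s] by (metis image_eqI)
    qed
  qed
  then show ?thesis by (simp add: AE_completion_iff)
qed

section \<open>Representatives and norms in \<open>H\<^sup>2\<close>\<close>

lemma L2_measurable: "L2 f \<Longrightarrow> f \<in> borel_measurable lborel"
  by (simp add: L2_def)

text \<open>The \<open>H\<^sup>2\<close> norm can be computed from any witness, since weak derivatives are unique almost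
  everywhere.\<close>

lemma H2_norm_char:
  assumes w: "H2_witness f g h"
  shows "H2_norm f = sqrt ((\<integral>t. (f t)\<^sup>2 \<partial>lborel) + (\<integral>t. (g t)\<^sup>2 \<partial>lborel) + (\<integral>t. (h t)\<^sup>2 \<partial>lborel))"
proof -
  define W where "W = (SOME (g, h). H2_witness f g h)"
  have "\<exists>w. (\<lambda>(g, h). H2_witness f g h) w" using w by auto
  then have "(\<lambda>(g, h). H2_witness f g h) W" unfolding W_def by (rule someI_ex)
  then have w2: "H2_witness f (fst W) (snd W)" by (simp add: case_prod_beta)
  have L: "L2 f" "L2 g" "L2 h" "weak_deriv f g" "weak_deriv g h" using w
    by (auto simp: H2_witness_def)
  have L': "L2 (fst W)" "L2 (snd W)" "weak_deriv f (fst W)" "weak_deriv (fst W) (snd W)"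
    using w2 by (auto simp: H2_witness_def)
  have ae1: "AE t in lborel. fst W t = g t"
    by (rule weak_deriv_unique[OF L'(3) L(4)]) (auto intro: L2_imp_locally_integrable L L')
  have "weak_deriv (fst W) h"
    by (rule weak_deriv_AE_cong[OF L(5)]) (use L2_measurable[OF L'(1)] L2_measurable[OF L(3)] ae1 in
        auto)
  then have ae2: "AE t in lborel. snd W t = h t"
    by (intro weak_deriv_unique[OF L'(4)]) (auto intro: L2_imp_locally_integrable L L')
  have "(\<integral>t. (fst W t)\<^sup>2 \<partial>lborel) = (\<integral>t. (g t)\<^sup>2 \<partial>lborel)"
    by (rule integral_cong_AE) (use ae1 L2_measurable[OF L'(1)] L2_measurable[OF L(2)] in auto)
  moreover have "(\<integral>t. (snd W t)\<^sup>2 \<partial>lborel) = (\<integral>t. (h t)\<^sup>2 \<partial>lborel)"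
    by (rule integral_cong_AE) (use ae2 L2_measurable[OF L'(2)] L2_measurable[OF L(3)] in auto)
  ultimately show ?thesis unfolding H2_norm_def W_def[symmetric]
    by (simp add: case_prod_beta Let_def)
qed

lemma L2_AE_cong:
  assumes f: "L2 f" and f'_meas: "f' \<in> borel_measurable lborel" and ae: "AE t in lborel. f t = f' t"
  shows "L2 f'" and "(\<integral>t. (f' t)\<^sup>2 \<partial>lborel) = (\<integral>t. (f t)\<^sup>2 \<partial>lborel)"
proof -
  have f2: "integrable lborel (\<lambda>t. (f t)\<^sup>2)" using f by (simp add: L2_def)
  have [measurable]: "f' \<in> borel_measurable lborel" by (fact f'_meas)
  have ae2: "AE t in lborel. (f t)\<^sup>2 = (f' t)\<^sup>2" using ae by eventually_elim simp
  have "integrable lborel (\<lambda>t. (f' t)\<^sup>2)"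
    by (rule integrable_cong_AE_imp[OF f2 _ ae2]) measurable
  then show "L2 f'" using f'_meas by (simp add: L2_def)
  show "(\<integral>t. (f' t)\<^sup>2 \<partial>lborel) = (\<integral>t. (f t)\<^sup>2 \<partial>lborel)"
    by (rule integral_cong_AE[symmetric]) (use ae2 f'_meas L2_measurable[OF f] in auto)
qed

lemma H2_witness_AE_cong:
  assumes w: "H2_witness f g h"
    and meas: "f' \<in> borel_measurable lborel" "g' \<in> borel_measurable lborel"
    and ae: "AE t in lborel. f t = f' t" "AE t in lborel. g t = g' t"
  shows "H2_witness f' g' h" and "H2_norm f' = H2_norm f"
proof -
  have L: "L2 f" "L2 g" "L2 h" "weak_deriv f g" "weak_deriv g h" using w
    by (auto simp: H2_witness_def)
  have "weak_deriv f' g'" by (rule weak_deriv_AE_cong[OF L(4) meas ae])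
  moreover have "weak_deriv g' h"
    by (rule weak_deriv_AE_cong[OF L(5) meas(2) L2_measurable[OF L(3)] ae(2)]) simp
  ultimately show w': "H2_witness f' g' h"
    using L2_AE_cong(1)[OF L(1) meas(1) ae(1)] L2_AE_cong(1)[OF L(2) meas(2) ae(2)] L(3)
    by (simp add: H2_witness_def)
  show "H2_norm f' = H2_norm f"
    using H2_norm_char[OF w] H2_norm_char[OF w'] L2_AE_cong(2)[OF L(1) meas(1) ae(1)]
      L2_AE_cong(2)[OF L(2) meas(2) ae(2)] by simp
qed

lemma H2_continuous_representatives:
  assumes w: "H2_witness p q r"
  obtains P Q where "AE t in lborel. p t = P t" "AE t in lborel. q t = Q t"
    "\<And>t. (P has_real_derivative Q t) (at t)" "\<And>t. isCont Q t"
    "\<And>u v. Q v - Q u = (LBINT t=u..v. r t)"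
proof -
  have lp: "locally_integrable p" and lq: "locally_integrable q" and lr: "locally_integrable r"
    using w by (auto simp: H2_witness_def intro: L2_imp_locally_integrable)
  have wpq: "weak_deriv p q" and wqr: "weak_deriv q r" using w by (auto simp: H2_witness_def)
  have [measurable]: "q \<in> borel_measurable lborel"
    using w by (simp add: H2_witness_def L2_def)
  obtain d where qQ: "AE t in lborel. q t = d + (LBINT s=0..t. r s)"
    using weak_deriv_representative[OF wqr lq lr] by blast
  define Q where "Q t = d + (LBINT s=0..t. r s)" for t :: real
  have Q_cont: "isCont Q t" for t unfolding Q_def
    by (intro continuous_intros primitive_0_isCont[OF lr])
  have [measurable]: "Q \<in> borel_measurable borel"
    by (rule continuous_imp_borel_measurable[OF Q_cont])
  have Q_increment: "Q v - Q u = (LBINT t=u..v. r t)" for u v :: real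
    using interval_integral_sum_locally_integrable[OF lr, of 0 u v]
      by (simp add: Q_def zero_ereal_def)
  have qQ': "AE t in lborel. q t = Q t" using qQ by (simp add: Q_def)
  obtain c where pP: "AE t in lborel. p t = c + (LBINT s=0..t. q s)"
    using weak_deriv_representative[OF wpq lp lq] by blast
  define P where "P t = c + (LBINT s=0..t. Q s)" for t :: real
  have "(LBINT s=0..t. q s) = (LBINT s=0..t. Q s)" for t :: real
    by (rule interval_integral_cong_AE) (use qQ' in auto)
  then have pP': "AE t in lborel. p t = P t" using pP by (simp add: P_def)
  have P_deriv: "(P has_real_derivative Q t) (at t)" for t
    using primitive_has_derivative[OF Q_cont, of 0 t] unfolding P_def[abs_def]
    by (auto intro!: derivative_eq_intros simp: zero_ereal_def)
  show thesis by (rule that[OF pP' qQ' P_deriv Q_cont Q_increment])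
qed

lemma weighted_square_integral_bounds:
  fixes f w :: "real \<Rightarrow> real" and a b :: real
  assumes f2: "integrable lborel (\<lambda>t. (f t)\<^sup>2)"
    and meas[measurable]: "f \<in> borel_measurable lborel" "w \<in> borel_measurable lborel"
    and lower: "\<And>t. a \<le> w t" and upper: "\<And>t. w t \<le> b" and a: "0 \<le> a"
  shows "integrable lborel (\<lambda>t. w t * (f t)\<^sup>2)"
    and "a * (\<integral>t. (f t)\<^sup>2 \<partial>lborel) \<le> (\<integral>t. w t * (f t)\<^sup>2 \<partial>lborel)"
    and "(\<integral>t. w t * (f t)\<^sup>2 \<partial>lborel) \<le> b * (\<integral>t. (f t)\<^sup>2 \<partial>lborel)"
proof -
  have w_nonneg: "0 \<le> w t" for t using a lower[of t] by linarith
  show wi: "integrable lborel (\<lambda>t. w t * (f t)\<^sup>2)"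
  proof (rule Bochner_Integration.integrable_bound[OF integrable_mult_right[OF f2, of b]])
    show "AE t in lborel. norm (w t * (f t)\<^sup>2) \<le> norm (b * (f t)\<^sup>2)"
    proof (intro AE_I2)
      fix t
      have "w t * (f t)\<^sup>2 \<le> \<bar>b\<bar> * (f t)\<^sup>2" using upper[of t] by (intro mult_right_mono) auto
      then show "norm (w t * (f t)\<^sup>2) \<le> norm (b * (f t)\<^sup>2)"
        using w_nonneg[of t] by (simp add: abs_mult)
    qed
  qed measurable
  have "(\<integral>t. a * (f t)\<^sup>2 \<partial>lborel) \<le> (\<integral>t. w t * (f t)\<^sup>2 \<partial>lborel)"
    using f2 wi lower by (intro integral_mono) (auto intro: mult_right_mono)
  then show "a * (\<integral>t. (f t)\<^sup>2 \<partial>lborel) \<le> (\<integral>t. w t * (f t)\<^sup>2 \<partial>lborel)" by simp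
  have "(\<integral>t. w t * (f t)\<^sup>2 \<partial>lborel) \<le> (\<integral>t. b * (f t)\<^sup>2 \<partial>lborel)"
    using f2 wi upper by (intro integral_mono) (auto intro: mult_right_mono)
  then show "(\<integral>t. w t * (f t)\<^sup>2 \<partial>lborel) \<le> b * (\<integral>t. (f t)\<^sup>2 \<partial>lborel)" by simp
qed

lemma sqrt_two_sided_bounds:
  fixes m A B :: real
  assumes m: "0 < m" and A: "0 \<le> A" and lower: "m * A \<le> B" and upper: "B \<le> A / m ^ 8"
  shows "sqrt m * sqrt A \<le> sqrt B" and "sqrt B \<le> 1 / m ^ 4 * sqrt A"
proof -
  show "sqrt m * sqrt A \<le> sqrt B" using lower by (simp add: real_sqrt_mult[symmetric])
  have "sqrt (m ^ 8) = m ^ 4"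
    using m real_sqrt_abs[of "m ^ 4"] by (simp add: power_mult[symmetric])
  then have "sqrt (A / m ^ 8) = 1 / m ^ 4 * sqrt A" by (simp add: real_sqrt_divide)
  moreover have "sqrt B \<le> sqrt (A / m ^ 8)" using upper by (rule real_sqrt_le_mono)
  ultimately show "sqrt B \<le> 1 / m ^ 4 * sqrt A" by simp
qed

text \<open>If \<open>q = sin w\<close> with \<open>|w| < \<pi>/2\<close>, then \<open>tan w = q / \<surd>(1 - q\<^sup>2)\<close>; its derivative with
  respect to \<open>q\<close> is \<open>(1 - q\<^sup>2)\<^sup>-\<^sup>3\<^sup>/\<^sup>2\<close>.\<close>

definition tan_of_sin :: "real \<Rightarrow> real" where
  "tan_of_sin z = z / sqrt (1 - z\<^sup>2)"

lemma tan_of_sin_deriv: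
  fixes z :: real
  assumes "\<bar>z\<bar> < 1"
  shows "(tan_of_sin has_real_derivative 1 / (sqrt (1 - z\<^sup>2)) ^ 3) (at z)"
proof -
  have pos: "1 - z\<^sup>2 > 0" using abs_square_less_1[of z] assms by simp
  define s where "s = sqrt (1 - z\<^sup>2)"
  have s: "s > 0" "s\<^sup>2 = 1 - z\<^sup>2" using pos by (auto simp: s_def)
  have d1: "((\<lambda>z. 1 - z\<^sup>2) has_real_derivative - (2*z)) (at z)"
    by (auto intro!: derivative_eq_intros)
  have d2: "((\<lambda>z. sqrt (1 - z\<^sup>2))
      has_real_derivative inverse (sqrt (1 - z\<^sup>2)) / 2 * (- (2*z))) (at z)"
    using DERIV_chain2[OF DERIV_real_sqrt[OF pos] d1] .
  have d3: "(tan_of_sin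
      has_real_derivative (1 * s - z * (inverse s / 2 * (- (2*z)))) / (s * s)) (at z)"
    using DERIV_divide[OF DERIV_ident d2] s unfolding s_def tan_of_sin_def[abs_def] by simp
  have "1 * s - z * (inverse s / 2 * (- (2*z))) = (s\<^sup>2 + z\<^sup>2) / s"
    using s by (simp add: field_simps power2_eq_square)
  also have "\<dots> = 1 / s" using s by simp
  finally have "(1 * s - z * (inverse s / 2 * (- (2*z)))) / (s * s) = 1 / s ^ 3"
    using s by (simp add: field_simps power2_eq_square power3_eq_cube)
  with d3 show ?thesis by (simp add: s_def)
qed

section \<open>The coordinate change\<close>

text \<open>The map \<open>x\<close> has derivative
  \<open>slope = \<surd>(1 - Q\<^sup>2)\<close> (that is \<open>cos w\<close> for \<open>Q = sin w\<close>), which lies between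
  \<open>min_slope = \<surd>(1 - q\<^sub>c\<^sup>2)\<close> and \<open>1\<close>, and \<open>y\<close> is its inverse.\<close>

locale coordinate_change =
  fixes P Q r x y :: "real \<Rightarrow> real" and qc :: real
  assumes r_loc: "locally_integrable r"
    and Q_increment: "\<And>u v. Q v - Q u = (LBINT t=u..v. r t)"
    and Q_cont: "\<And>t. isCont Q t"
    and P_deriv: "\<And>t. (P has_real_derivative Q t) (at t)"
    and Q_bound: "\<And>t. \<bar>Q t\<bar> \<le> qc" and qc_less_1: "qc < 1"
    and x_deriv: "\<And>t. (x has_real_derivative sqrt (1 - (Q t)\<^sup>2)) (at t)"
    and x_y: "\<And>s. x (y s) = s"
begin

definition slope :: "real \<Rightarrow> real" where
  "slope t = sqrt (1 - (Q t)\<^sup>2)"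

definition min_slope :: real where
  "min_slope = sqrt (1 - qc\<^sup>2)"

lemma min_slope_pos: "0 < min_slope" and min_slope_le_1: "min_slope \<le> 1"
proof -
  have "0 \<le> qc" using Q_bound[of 0] by linarith
  then have "qc\<^sup>2 < 1" using qc_less_1 by (simp add: abs_square_less_1)
  then show "0 < min_slope" "min_slope \<le> 1" by (auto simp: min_slope_def)
qed

lemma slope_bounds: "min_slope \<le> slope t" "slope t \<le> 1"
proof -
  have "(Q t)\<^sup>2 \<le> qc\<^sup>2" using power_mono[OF Q_bound[of t] abs_ge_zero, of 2] by simp
  then show "min_slope \<le> slope t" "slope t \<le> 1" by (auto simp: slope_def min_slope_def)
qed

lemma slope_pos: "0 < slope t"
  using slope_bounds(1)[of t] min_slope_pos by linarith

lemma slope_cont: "isCont slope t"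
  unfolding slope_def[abs_def] by (intro continuous_intros Q_cont)

lemma slope_measurable[measurable]: "slope \<in> borel_measurable borel"
  by (rule continuous_imp_borel_measurable[OF slope_cont])

lemma x_has_slope: "(x has_real_derivative slope t) (at t)"
  using x_deriv by (simp add: slope_def)

lemma x_strict_mono:
  assumes "t1 < t2" shows "x t1 < x t2"
  by (rule DERIV_pos_imp_increasing[OF assms]) (use x_has_slope slope_pos in blast)

lemma x_inj: "inj x"
  by (metis injI linorder_neq_iff x_strict_mono less_irrefl)

lemma x_surj: "surj x"
  by (metis surjI x_y)

lemma y_x: "y (x t) = t"
  using x_inj x_y by (metis injD)

lemma y_cont: "isCont y s"
proof -
  have x_cont: "isCont x t" for t using x_has_slope DERIV_isCont by blast
  have "isCont y (x (y s))"
    by (rule isCont_inverse_function[where d=1]) (auto simp: y_x x_cont)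
  then show ?thesis by (simp add: x_y)
qed

lemma y_measurable[measurable]: "y \<in> borel_measurable borel"
  by (rule continuous_imp_borel_measurable[OF y_cont])

lemma y_deriv: "(y has_real_derivative 1 / slope (y s)) (at s)"
proof -
  have "(y has_real_derivative inverse (slope (y s))) (at s)"
    by (rule DERIV_inverse_function[where f=x and a="s - 1" and b="s + 1"])
       (use x_has_slope slope_pos x_y y_cont in \<open>auto simp: less_imp_neq[symmetric]\<close>)
  then show ?thesis by (simp add: divide_inverse)
qed

lemma inv_slope_y_cont: "isCont (\<lambda>s. 1 / slope (y s)) s"
  using slope_pos by (intro continuous_intros continuous_at_compose[OF y_cont, unfolded o_def]
      slope_cont) (auto simp: less_imp_neq[symmetric])

text \<open>The transported function \<open>u = P \<circ> y\<close> and its derivatives \<open>u' = (Q / slope) \<circ> y\<close> and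
  \<open>u'' = (r / slope\<^sup>4) \<circ> y\<close>; these formulas correspond to \<open>u\<^sub>x = tan w\<close> and
  \<open>u\<^sub>x\<^sub>x = p\<^sub>y\<^sub>y / cos\<^sup>4 w\<close>.\<close>

definition u0 :: "real \<Rightarrow> real" where "u0 s = P (y s)"
definition u1 :: "real \<Rightarrow> real" where "u1 s = Q (y s) / slope (y s)"
definition u2 :: "real \<Rightarrow> real" where "u2 s = r (y s) / slope (y s) ^ 4"

lemma u0_deriv: "(u0 has_real_derivative u1 s) (at s)"
  using DERIV_chain2[OF P_deriv y_deriv] unfolding u0_def[abs_def] by (simp add: u1_def)

lemma u1_cont: "isCont u1 s"
  unfolding u1_def using slope_pos
  by (intro continuous_intros continuous_at_compose[OF y_cont, unfolded o_def] slope_cont Q_cont)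
     (auto simp: less_imp_neq[symmetric])

text \<open>\<open>u'\<close> is the primitive of \<open>u''\<close>: the chain rule applied to \<open>tan_of_sin \<circ> Q\<close>, followed by
  the substitution \<open>t = y s\<close>.\<close>

lemma u1_increment:
  assumes ab: "a \<le> b"
  shows "u1 b - u1 a = (LBINT s=a..b. u2 s)"
proof -
  let ?G' = "\<lambda>z. 1 / (sqrt (1 - z\<^sup>2)) ^ 3"
  have range: "Q t \<in> {-qc..qc}" for t using Q_bound[of t] by auto
  have G_deriv: "(tan_of_sin has_real_derivative ?G' z) (at z)" if "z \<in> {-qc..qc}" for z
    using that qc_less_1 by (intro tan_of_sin_deriv) auto
  have G'_cont: "continuous_on {-qc..qc} ?G'"
  proof (intro continuous_at_imp_continuous_on ballI)
    fix z :: real assume "z \<in> {-qc..qc}"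
    then have "1 - z\<^sup>2 > 0" using qc_less_1 abs_square_less_1[of z] by auto
    then show "isCont ?G' z" by (intro continuous_intros) auto
  qed
  have u1_tan: "u1 s = tan_of_sin (Q (y s))" for s by (simp add: u1_def slope_def tan_of_sin_def)
  have y_ab: "y a \<le> y b"
    by (rule positive_deriv_mono[OF y_deriv _ ab]) (simp add: slope_pos)
  have "u1 b - u1 a = (LBINT t=y a..y b. ?G' (Q t) * r t)"
    unfolding u1_tan by (rule chain_rule_absolutely_continuous[OF r_loc Q_increment Q_cont range
        G_deriv G'_cont y_ab])
  also have "\<dots> = (LBINT s=a..b. ?G' (Q (y s)) * r (y s) * (1 / slope (y s)))"
    by (rule interval_integral_substitution[OF chain_rule_integrand[OF r_loc Q_increment Q_cont
          range G_deriv G'_cont] y_deriv _ inv_slope_y_cont x_y y_x _ ab])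
       (use slope_pos x_strict_mono in \<open>auto simp: le_less\<close>)
  also have "\<dots> = (LBINT s=a..b. u2 s)"
  proof -
    have "?G' (Q t) = 1 / slope t ^ 3" for t by (simp add: slope_def)
    then have "?G' (Q (y s)) * r (y s) * (1 / slope (y s)) = u2 s" for s
      using slope_pos[of "y s"] by (simp add: u2_def field_simps numeral_eq_Suc)
    then show ?thesis by simp
  qed
  finally show ?thesis .
qed

lemma u0_primitive: "u0 = (\<lambda>s. u0 0 + (LBINT t=0..s. u1 t))"
proof
  fix s :: real
  have "(LBINT t=0..s. u1 t) = u0 s - u0 0"
    using interval_integral_FTC_finite[of 0 s u1 u0] u0_deriv u1_cont
    by (simp add: zero_ereal_def continuous_at_imp_continuous_on
        has_real_derivative_iff_has_vector_derivative[symmetric] has_field_derivative_at_within)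
  then show "u0 s = u0 0 + (LBINT t=0..s. u1 t)" by simp
qed

lemma u1_primitive: "u1 = (\<lambda>s. u1 0 + (LBINT t=0..s. u2 t))"
proof
  fix s :: real
  show "u1 s = u1 0 + (LBINT t=0..s. u2 t)"
  proof (cases "0 \<le> s")
    case True then show ?thesis using u1_increment[OF True] by (simp add: zero_ereal_def)
  next
    case False
    have "(LBINT t=ereal 0..ereal s. u2 t) = - (LBINT t=ereal s..ereal 0. u2 t)"
      by (rule interval_integral_endpoints_reverse)
    then show ?thesis using u1_increment[of s 0] False by (simp add: zero_ereal_def)
  qed
qed

text \<open>Values along \<open>x\<close>; combined with the change of variables \<open>s = x t\<close> they express
  \<open>\<integral> u\<^sup>2\<close>, \<open>\<integral> u'\<^sup>2\<close>, \<open>\<integral> u''\<^sup>2\<close> as weighted square integrals of \<open>P\<close>, \<open>Q\<close>, \<open>r\<close>.\<close>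

lemma u0_x: "slope t * (u0 (x t))\<^sup>2 = slope t * (P t)\<^sup>2"
  by (simp add: u0_def y_x)

lemma u1_x: "slope t * (u1 (x t))\<^sup>2 = 1 / slope t ^ 1 * (Q t)\<^sup>2"
  using slope_pos[of t] by (simp add: u1_def y_x power2_eq_square field_simps)

lemma u2_x: "slope t * (u2 (x t))\<^sup>2 = 1 / slope t ^ 7 * (r t)\<^sup>2"
  using slope_pos[of t] by (simp add: u2_def y_x power2_eq_square field_simps numeral_eq_Suc)

lemma slope_weight_bounds: "min_slope \<le> slope t" "slope t \<le> 1 / min_slope ^ 8"
  and inv_slope_weight_bounds: "k \<le> 8 \<Longrightarrow> min_slope \<le> 1 / slope t ^ k"
    "k \<le> 8 \<Longrightarrow> 1 / slope t ^ k \<le> 1 / min_slope ^ 8"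
proof -
  have m: "0 < min_slope" "min_slope \<le> 1" by (rule min_slope_pos, rule min_slope_le_1)
  have one_le: "1 \<le> 1 / min_slope ^ 8" using m by (simp add: power_le_one)
  show "min_slope \<le> slope t" by (rule slope_bounds)
  show "slope t \<le> 1 / min_slope ^ 8" using slope_bounds(2)[of t] one_le by linarith
  have pow: "0 < slope t ^ k" "slope t ^ k \<le> 1" "min_slope ^ k \<le> slope t ^ k"
    using slope_pos[of t] slope_bounds[of t] m by (auto intro: power_le_one power_mono)
  have "min_slope * slope t ^ k \<le> 1" using pow m by (intro mult_le_one) auto
  then show "min_slope \<le> 1 / slope t ^ k" using pow by (simp add: le_divide_eq)
  assume "k \<le> 8"
  then have "min_slope ^ 8 \<le> min_slope ^ k" using m by (intro power_decreasing) auto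
  then have "min_slope ^ 8 \<le> slope t ^ k" using pow by linarith
  then show "1 / slope t ^ k \<le> 1 / min_slope ^ 8" using m pow by (intro divide_left_mono) auto
qed

lemma transported_square_integral:
  fixes f G w :: "real \<Rightarrow> real"
  assumes f: "L2 f" and G_meas: "G \<in> borel_measurable borel"
      and w_meas: "w \<in> borel_measurable borel"
    and along_x: "\<And>t. slope t * (G (x t))\<^sup>2 = w t * (f t)\<^sup>2"
    and w_lower: "\<And>t. min_slope \<le> w t" and w_upper: "\<And>t. w t \<le> 1 / min_slope ^ 8"
  shows "L2 G"
    and "min_slope * (\<integral>t. (f t)\<^sup>2 \<partial>lborel) \<le> (\<integral>t. (G t)\<^sup>2 \<partial>lborel)"
    and "(\<integral>t. (G t)\<^sup>2 \<partial>lborel) \<le> 1 / min_slope ^ 8 * (\<integral>t. (f t)\<^sup>2 \<partial>lborel)"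
proof -
  have f2: "integrable lborel (\<lambda>t. (f t)\<^sup>2)" and [measurable]: "f \<in> borel_measurable lborel"
    using f by (auto simp: L2_def)
  have [measurable]: "G \<in> borel_measurable borel" "w \<in> borel_measurable borel"
    using G_meas w_meas by simp_all
  note bounds = weighted_square_integral_bounds[OF f2, of w min_slope "1 / min_slope ^ 8"]
  have wi: "integrable lborel (\<lambda>t. w t * (f t)\<^sup>2)"
    using bounds w_lower w_upper min_slope_pos by auto
  have cov: "integrable lborel (\<lambda>t. (G t)\<^sup>2)"
    "(\<integral>t. (G t)\<^sup>2 \<partial>lborel) = (\<integral>t. w t * (f t)\<^sup>2 \<partial>lborel)"
    using integral_change_of_variables[OF x_has_slope slope_pos x_inj x_surj, of "\<lambda>t. (G t)\<^sup>2"] wi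
    unfolding along_x by auto
  then show "L2 G" by (simp add: L2_def)
  show "min_slope * (\<integral>t. (f t)\<^sup>2 \<partial>lborel) \<le> (\<integral>t. (G t)\<^sup>2 \<partial>lborel)"
    "(\<integral>t. (G t)\<^sup>2 \<partial>lborel) \<le> 1 / min_slope ^ 8 * (\<integral>t. (f t)\<^sup>2 \<partial>lborel)"
    unfolding cov(2) using bounds w_lower w_upper min_slope_pos by auto
qed

theorem transported_H2:
  assumes w: "H2_witness P Q r"
  shows "H2_witness u0 u1 u2"
    and "sqrt min_slope * H2_norm P \<le> H2_norm u0"
    and "H2_norm u0 \<le> 1 / min_slope ^ 4 * H2_norm P"
proof -
  have L: "L2 P" "L2 Q" "L2 r" using w by (auto simp: H2_witness_def)
  have [measurable]: "r \<in> borel_measurable borel" using L(3) by (simp add: L2_def)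
  have P_cont: "isCont P t" for t using P_deriv DERIV_isCont by blast
  have [measurable]: "P \<in> borel_measurable borel" "Q \<in> borel_measurable borel"
    by (intro continuous_imp_borel_measurable P_cont Q_cont)+
  have u_meas: "u0 \<in> borel_measurable borel" "u1 \<in> borel_measurable borel"
    "u2 \<in> borel_measurable borel"
    unfolding u0_def[abs_def] u1_def[abs_def] u2_def[abs_def] by measurable
  have w_meas: "(\<lambda>t. 1 / slope t ^ k) \<in> borel_measurable borel" for k by measurable
  note T0 = transported_square_integral[OF L(1) u_meas(1) slope_measurable u0_x slope_weight_bounds]
  note T1 = transported_square_integral[OF L(2) u_meas(2) w_meas u1_x inv_slope_weight_bounds]
  note T2 = transported_square_integral[OF L(3) u_meas(3) w_meas u2_x inv_slope_weight_bounds]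
  have L_u: "L2 u0" "L2 u1" "L2 u2" using T0(1) T1(1) T2(1) by simp_all
  have "weak_deriv u0 u1"
    by (subst u0_primitive,
        rule weak_deriv_primitive[OF continuous_imp_locally_integrable[OF u1_cont]])
  moreover have "weak_deriv u1 u2"
    by (subst u1_primitive, rule weak_deriv_primitive[OF L2_imp_locally_integrable[OF L_u(3)]])
  ultimately show wu: "H2_witness u0 u1 u2" using L_u by (simp add: H2_witness_def)
  define A where "A = (\<integral>t. (P t)\<^sup>2 \<partial>lborel) + (\<integral>t. (Q t)\<^sup>2 \<partial>lborel) + (\<integral>t. (r t)\<^sup>2 \<partial>lborel)"
  define B where "B = (\<integral>t. (u0 t)\<^sup>2 \<partial>lborel) + (\<integral>t. (u1 t)\<^sup>2 \<partial>lborel) + (\<integral>t. (u2 t)\<^sup>2 \<partial>lborel)"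
  have "0 \<le> A" by (simp add: A_def)
  moreover have "min_slope * A \<le> B"
    using T0(2) T1(2) T2(2) by (simp add: A_def B_def algebra_simps)
  moreover have "B \<le> A / min_slope ^ 8"
    using T0(3) T1(3) T2(3) unfolding A_def B_def add_divide_distrib by simp
  ultimately show "sqrt min_slope * H2_norm P \<le> H2_norm u0"
    and "H2_norm u0 \<le> 1 / min_slope ^ 4 * H2_norm P"
    using sqrt_two_sided_bounds[OF min_slope_pos] H2_norm_char[OF w] H2_norm_char[OF wu]
    by (auto simp: A_def B_def)
qed

end

lemma primitive_AE_cong_deriv:
  fixes f F x :: "real \<Rightarrow> real" and x0 :: real
  assumes x_def: "\<And>s. x s = x0 + (LBINT t=0..s. f t)"
    and f_meas: "f \<in> borel_measurable lborel" and F_cont: "\<And>t. isCont F t"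
    and ae: "AE t in lborel. f t = F t"
  shows "(x has_real_derivative F t) (at t)"
proof -
  have [measurable]: "F \<in> borel_measurable borel"
    by (rule continuous_imp_borel_measurable[OF F_cont])
  have "(LBINT s=0..u. f s) = (LBINT s=0..u. F s)" for u :: real
    by (rule interval_integral_cong_AE) (use f_meas ae in auto)
  then have "x = (\<lambda>u. x0 + (LBINT s=0..u. F s))" using x_def by auto
  moreover have "((\<lambda>u. LBINT s=0..u. F s) has_real_derivative F t) (at t)"
    using primitive_has_derivative[OF F_cont, of 0 t] by (simp add: zero_ereal_def)
  ultimately show ?thesis by (auto intro!: derivative_eq_intros)
qed

text \<open>Pass to the continuous representatives \<open>P, Q\<close> of \<open>p, p'\<close>, apply \<open>transported_H2\<close>, and
  return to \<open>p\<close> and \<open>p \<circ> y\<close>, which differ from \<open>P\<close> and \<open>P \<circ> y\<close> only on null sets.\<close>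

theorem H2_change_of_variables:
  fixes p q x y :: "real \<Rightarrow> real" and x0 qc :: real
  assumes qc1: "qc < 1" and Hq: "H1 q" and Hp: "H2 p" and wpq: "weak_deriv p q"
    and qb: "AE s in lborel. \<bar>q s\<bar> \<le> qc"
    and x_def: "\<And>s. x s = x0 + (LBINT t=0..s. sqrt (1 - (q t)\<^sup>2))"
    and xy: "\<And>s. x (y s) = s"
  shows "H2 (\<lambda>s. p (y s))
    \<and> sqrt (sqrt (1 - qc\<^sup>2)) * H2_norm p \<le> H2_norm (\<lambda>s. p (y s))
    \<and> H2_norm (\<lambda>s. p (y s)) \<le> 1 / sqrt (1 - qc\<^sup>2) ^ 4 * H2_norm p"
proof -
  obtain r where wp: "H2_witness p q r"
    using Hp Hq wpq by (auto simp: H1_def H2_def H2_witness_def)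
  then obtain P Q where pP: "AE t in lborel. p t = P t" and qQ: "AE t in lborel. q t = Q t"
    and P_deriv: "\<And>t. (P has_real_derivative Q t) (at t)" and Q_cont: "\<And>t. isCont Q t"
    and Q_increment: "\<And>u v. Q v - Q u = (LBINT t=u..v. r t)"
    using H2_continuous_representatives by blast
  have [measurable]: "q \<in> borel_measurable borel" using Hq by (simp add: H1_def L2_def)
  have "P \<in> borel_measurable borel" "Q \<in> borel_measurable borel"
    using P_deriv DERIV_isCont Q_cont by (blast intro: continuous_imp_borel_measurable)+
  then have PQ_meas: "P \<in> borel_measurable lborel" "Q \<in> borel_measurable lborel" by simp_all
  note P_transfer = H2_witness_AE_cong[OF wp PQ_meas pP qQ]
  have wP: "H2_witness P Q r" by (rule P_transfer(1))
  have "AE t in lborel. \<bar>Q t\<bar> \<le> qc" using qb qQ by eventually_elim simp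
  then have Q_bound: "\<bar>Q t\<bar> \<le> qc" for t by (rule continuous_AE_bound[OF Q_cont])
  have "(x has_real_derivative sqrt (1 - (Q t)\<^sup>2)) (at t)" for t
    by (rule primitive_AE_cong_deriv[OF x_def]) (use qQ in \<open>auto intro!: continuous_intros Q_cont\<close>)
  then interpret coordinate_change P Q r x y qc
    using wP Q_increment Q_cont P_deriv Q_bound qc1 xy
    by unfold_locales (auto simp: H2_witness_def intro: L2_imp_locally_integrable)
  have "AE s in lborel. p (y s) = P (y s)"
    by (rule AE_compose_right_inverse[of x y p P, OF _ xy pP])
       (use x_has_slope real_differentiable_def in blast)
  then have ae_u: "AE s in lborel. u0 s = p (y s)" by eventually_elim (simp add: u0_def)
  have [measurable]: "p \<in> borel_measurable borel" using wp by (simp add: H2_witness_def L2_def)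
  have u_meas: "(\<lambda>s. p (y s)) \<in> borel_measurable lborel" by measurable
  have u1_meas: "u1 \<in> borel_measurable lborel"
    using transported_H2(1)[OF wP] by (simp add: H2_witness_def L2_def)
  note u_transfer
      = H2_witness_AE_cong[OF transported_H2(1)[OF wP] u_meas u1_meas ae_u AE_I2[OF refl]]
  show ?thesis
    using u_transfer transported_H2(2,3)[OF wP] P_transfer(2) by (auto simp: H2_def min_slope_def)
qed

theorem lemma2:
  fixes qc :: real
  assumes "0 < qc" "qc < 1"
  shows "\<exists>Cm Cp :: real. 0 < Cm \<and> 0 < Cp \<and>
    (\<forall>(p :: real \<Rightarrow> real) (q :: real \<Rightarrow> real) (x :: real \<Rightarrow> real) (y :: real \<Rightarrow> real) (x0 :: real).
       H1 q \<longrightarrow> H2 p \<longrightarrow> weak_deriv p q \<longrightarrow>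
       (AE s in lborel. \<bar>q s\<bar> \<le> qc) \<longrightarrow>
       (\<forall>s. x s = x0 + (LBINT t=0..s. sqrt (1 - (q t)\<^sup>2))) \<longrightarrow>
       (\<forall>s. x (y s) = s) \<longrightarrow>
       (let u = (\<lambda>s. p (y s)) in
          H2 u \<and> Cm * H2_norm p \<le> H2_norm u \<and> H2_norm u \<le> Cp * H2_norm p))"
proof -
  define m where "m = sqrt (1 - qc\<^sup>2)"
  have "qc\<^sup>2 < 1" using assms by (simp add: abs_square_less_1)
  then have m_pos: "0 < m" by (simp add: m_def)
  show ?thesis
  proof (rule exI[of _ "sqrt m"], rule exI[of _ "1 / m ^ 4"], intro conjI allI impI)
    show "0 < sqrt m" "0 < 1 / m ^ 4" using m_pos by simp_all
    fix p q x y :: "real \<Rightarrow> real" and x0 :: real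
    assume "H1 q" "H2 p" "weak_deriv p q" "AE s in lborel. \<bar>q s\<bar> \<le> qc"
      "\<forall>s. x s = x0 + (LBINT t=0..s. sqrt (1 - (q t)\<^sup>2))" "\<forall>s. x (y s) = s"
    then show "let u = (\<lambda>s. p (y s)) in
        H2 u \<and> sqrt m * H2_norm p \<le> H2_norm u \<and> H2_norm u \<le> 1 / m ^ 4 * H2_norm p"
      using H2_change_of_variables[OF assms(2), of q p x x0 y] by (simp add: Let_def m_def)
  qed
qed

end
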